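(* Let $H$ be a connected, non-bipartite constraint graph on nodes $\{1,\dots,q\}$, let $r\ge1$, and fix a root $x$ of $\mathbb{T}^r$. Then every simple semi-invariant Gibbs measure $\mu$ on $\hom(\mathbb{T}^r,H)$ (for some activity vector) is obtained as follows: there are positive node-weights $w$ on $2H$ such that $\mu$ is the law of $|\psi|$, where $\psi$ is the random element of $\hom(\mathbb{T}^r,2H)$ produced by the $r$-branching $w$-random walk on $2H$ with the root spin $\psi(x)$ drawn from the stationary distribution of that walk restricted to the positive nodes $\{1,\dots,q\}$ and renormalized.
   Context: A constraint graph is a finite graph with loops allowed and no multiple edges; $N(i)$ is the set of nodes adjacent to $i$. The bipartite double $2H$ has nodes $\{\pm1,\dots,\pm q\}$, with $i\sim j$ in $2H$ iff $i,j$ have opposite signs and $|i|\sim|j|$ in $H$ (a loop at $i$ in $H$ becomes the edge $\{i,-i\}$). For $\psi\in\hom(\mathbb{T}^r,2H)$, $|\psi|(v)=|\psi(v)|$ defines an element of $\hom(\mathbb{T}^r,H)$. $\mathbb{T}^r$ is the infinite connected cycle-free graph with all degrees $r+1$; a site is even or odd according to the parity of its distance from $x$. A measure on $\hom(\mathbb{T}^r,H)$ is semi-invariant if $\mu(S\circ\kappa)=\mu(S)$ for every measurable $S$ and every automorphism $\kappa$ of $\mathbb{T}^r$ preserving parity, where $S\circ\kappa=\{\varphi\circ\kappa:\varphi\in S\}$. Activity vectors, Gibbs measures: for positive $\lambda$, a probability measure on $\hom(\mathbb{T}^r,H)$ is Gibbs for $\lambda$ if for every finite set $U$ of sites its conditional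 law on $U$ given the configuration off $U$ is a.s. the conditional law, given the values on $\partial U$ (the sites outside $U$ adjacent to $U$), under the measure on $\hom(U\cup\partial U,H)$ with weights $\prod_v\lambda_{\varphi(v)}$. A Gibbs measure on a tree is simple if, for every site $u$ and spin $i$, the restrictions of $\varphi$ to the components of $\mathbb{T}^r\setminus\{u\}$ are mutually independent given $\varphi(u)=i$. The $r$-branching $w$-random walk on a graph $K$ with positive node weights $w$: with $z_i=\sum_{j\in N(i)}w_j$, each child of a site with spin $i$ receives spin $j\in N(i)$ with probability $w_j/z_i$, independently given the parent's spin; its stationary distribution is $\pi_i\propto w_iz_i$. *)

theory Defs
  imports "HOL-Probability.Probability"
begin

text \<open>A constraint graph H on nodes 1..q is given by a symmetric relation E
(loops allowed) whose edges only join nodes in 1..q.\<close>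

definition constraint_graph :: "nat \<Rightarrow> (nat \<Rightarrow> nat \<Rightarrow> bool) \<Rightarrow> bool" where
  "constraint_graph q E \<longleftrightarrow>
     (\<forall>i j. E i j \<longrightarrow> E j i) \<and> (\<forall>i j. E i j \<longrightarrow> i \<in> {1..q} \<and> j \<in> {1..q})"

definition graph_connected :: "nat \<Rightarrow> (nat \<Rightarrow> nat \<Rightarrow> bool) \<Rightarrow> bool" where
  "graph_connected q E \<longleftrightarrow> (\<forall>i\<in>{1..q}. \<forall>j\<in>{1..q}. E\<^sup>*\<^sup>* i j)"

definition graph_bipartite :: "nat \<Rightarrow> (nat \<Rightarrow> nat \<Rightarrow> bool) \<Rightarrow> bool" where
  "graph_bipartite q E \<longleftrightarrow>
     (\<exists>c :: nat \<Rightarrow> bool. \<forall>i\<in>{1..q}. \<forall>j\<in>{1..q}. E i j \<longrightarrow> c i \<noteq> c j)"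

text \<open>Bipartite double 2H: nodes are the nonzero integers -q..q.\<close>

definition double_nodes :: "nat \<Rightarrow> int set" where
  "double_nodes q = {i. i \<noteq> 0 \<and> \<bar>i\<bar> \<le> int q}"

definition double_adj :: "nat \<Rightarrow> (nat \<Rightarrow> nat \<Rightarrow> bool) \<Rightarrow> int \<Rightarrow> int \<Rightarrow> bool" where
  "double_adj q E i j \<longleftrightarrow>
     i \<in> double_nodes q \<and> j \<in> double_nodes q \<and> i * j < 0 \<and> E (nat \<bar>i\<bar>) (nat \<bar>j\<bar>)"

text \<open>Sites of T^r are lists: the empty list, whose r+1 neighbours are the lists [a]
with a \<le> r; every other site v has the children v @ [a] with a < r and parent butlast v.\<close>

definition tree_verts :: "nat \<Rightarrow> nat list set" where
  "tree_verts r = {v. v = [] \<or> (hd v \<le> r \<and> (\<forall>a\<in>set (tl v). a < r))}"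

definition tree_adj :: "nat \<Rightarrow> nat list \<Rightarrow> nat list \<Rightarrow> bool" where
  "tree_adj r u v \<longleftrightarrow> u \<in> tree_verts r \<and> v \<in> tree_verts r \<and>
     ((v \<noteq> [] \<and> u = butlast v) \<or> (u \<noteq> [] \<and> v = butlast u))"

fun lcp :: "nat list \<Rightarrow> nat list \<Rightarrow> nat list" where
  "lcp (a # as) (b # bs) = (if a = b then a # lcp as bs else [])"
| "lcp _ _ = []"

definition tdist :: "nat list \<Rightarrow> nat list \<Rightarrow> nat" where
  "tdist u v = length u + length v - 2 * length (lcp u v)"

definition tparent :: "nat \<Rightarrow> nat list \<Rightarrow> nat list \<Rightarrow> nat list" where
  "tparent r x v = (THE u. tree_adj r u v \<and> tdist x u < tdist x v)"

definition ball :: "nat \<Rightarrow> nat list \<Rightarrow> nat \<Rightarrow> nat list set" where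
  "ball r x n = {v \<in> tree_verts r. tdist x v \<le> n}"

definition cfgM :: "nat \<Rightarrow> (nat list \<Rightarrow> nat) measure" where
  "cfgM r = PiM (tree_verts r) (\<lambda>_. count_space UNIV)"

definition cfgM2 :: "nat \<Rightarrow> (nat list \<Rightarrow> int) measure" where
  "cfgM2 r = PiM (tree_verts r) (\<lambda>_. count_space UNIV)"

definition hom_on :: "nat \<Rightarrow> nat \<Rightarrow> (nat \<Rightarrow> nat \<Rightarrow> bool) \<Rightarrow> nat list set \<Rightarrow> (nat list \<Rightarrow> nat) \<Rightarrow> bool" where
  "hom_on r q E A \<phi> \<longleftrightarrow> (\<forall>v\<in>A. \<phi> v \<in> {1..q}) \<and> (\<forall>u\<in>A. \<forall>v\<in>A. tree_adj r u v \<longrightarrow> E (\<phi> u) (\<phi> v))"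

definition is_hom :: "nat \<Rightarrow> nat \<Rightarrow> (nat \<Rightarrow> nat \<Rightarrow> bool) \<Rightarrow> (nat list \<Rightarrow> nat) \<Rightarrow> bool" where
  "is_hom r q E \<phi> \<longleftrightarrow> hom_on r q E (tree_verts r) \<phi>"

definition boundary :: "nat \<Rightarrow> nat list set \<Rightarrow> nat list set" where
  "boundary r U = {v \<in> tree_verts r - U. \<exists>u\<in>U. tree_adj r u v}"

definition spec_weight :: "nat \<Rightarrow> nat \<Rightarrow> (nat \<Rightarrow> nat \<Rightarrow> bool) \<Rightarrow> (nat \<Rightarrow> real) \<Rightarrow> nat list set
     \<Rightarrow> (nat list \<Rightarrow> nat) \<Rightarrow> (nat list \<Rightarrow> nat) \<Rightarrow> real" where
  "spec_weight r q E lam U \<eta> \<phi> =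
     (if hom_on r q E (U \<union> boundary r U) (\<lambda>v. if v \<in> U then \<eta> v else \<phi> v)
      then (\<Prod>v\<in>U. lam (\<eta> v)) else 0)"

definition spec_kernel :: "nat \<Rightarrow> nat \<Rightarrow> (nat \<Rightarrow> nat \<Rightarrow> bool) \<Rightarrow> (nat \<Rightarrow> real) \<Rightarrow> nat list set
     \<Rightarrow> (nat list \<Rightarrow> nat) \<Rightarrow> (nat list \<Rightarrow> nat) \<Rightarrow> real" where
  "spec_kernel r q E lam U \<eta> \<phi> =
     spec_weight r q E lam U \<eta> \<phi> / (\<Sum>\<eta>'\<in>(U \<rightarrow>\<^sub>E {1..q}). spec_weight r q E lam U \<eta>' \<phi>)"

definition gibbs :: "nat \<Rightarrow> nat \<Rightarrow> (nat \<Rightarrow> nat \<Rightarrow> bool) \<Rightarrow> (nat \<Rightarrow> real) \<Rightarrow> (nat list \<Rightarrow> nat) measure \<Rightarrow> bool" where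
  "gibbs r q E lam \<mu> \<longleftrightarrow>
     prob_space \<mu> \<and> sets \<mu> = sets (cfgM r) \<and> (AE \<phi> in \<mu>. is_hom r q E \<phi>) \<and>
     (\<forall>U \<eta> B. finite U \<longrightarrow> U \<subseteq> tree_verts r \<longrightarrow> B \<in> sets \<mu> \<longrightarrow>
        (\<forall>\<phi>\<in>space \<mu>. \<forall>\<psi>\<in>space \<mu>. (\<forall>v\<in>tree_verts r - U. \<phi> v = \<psi> v) \<longrightarrow> (\<phi> \<in> B \<longleftrightarrow> \<psi> \<in> B)) \<longrightarrow>
        measure \<mu> ({\<phi> \<in> space \<mu>. \<forall>v\<in>U. \<phi> v = \<eta> v} \<inter> B)
          = (\<integral>\<phi>. indicator B \<phi> * spec_kernel r q E lam U \<eta> \<phi> \<partial>\<mu>))"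

text \<open>Component of T^r minus u containing the neighbour n of u.\<close>
definition tcomp :: "nat \<Rightarrow> nat list \<Rightarrow> nat list \<Rightarrow> nat list set" where
  "tcomp r u n = {v \<in> tree_verts r. tdist n v < tdist u v}"

definition simple_gibbs :: "nat \<Rightarrow> (nat list \<Rightarrow> nat) measure \<Rightarrow> bool" where
  "simple_gibbs r \<mu> \<longleftrightarrow>
     (\<forall>u\<in>tree_verts r. \<forall>i::nat. measure \<mu> {\<phi> \<in> space \<mu>. \<phi> u = i} > 0 \<longrightarrow>
        prob_space.indep_vars (uniform_measure \<mu> {\<phi> \<in> space \<mu>. \<phi> u = i})
          (\<lambda>n. PiM (tcomp r u n) (\<lambda>_. count_space (UNIV :: nat set)))
          (\<lambda>n \<phi>. restrict \<phi> (tcomp r u n))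
          {n. tree_adj r u n})"

definition parity_aut :: "nat \<Rightarrow> nat list \<Rightarrow> (nat list \<Rightarrow> nat list) \<Rightarrow> bool" where
  "parity_aut r x \<kappa> \<longleftrightarrow> bij_betw \<kappa> (tree_verts r) (tree_verts r) \<and>
     (\<forall>u\<in>tree_verts r. \<forall>v\<in>tree_verts r. tree_adj r u v \<longleftrightarrow> tree_adj r (\<kappa> u) (\<kappa> v)) \<and>
     (\<forall>v\<in>tree_verts r. even (tdist x v) \<longleftrightarrow> even (tdist x (\<kappa> v)))"

definition compose_set :: "nat \<Rightarrow> (nat list \<Rightarrow> nat) set \<Rightarrow> (nat list \<Rightarrow> nat list) \<Rightarrow> (nat list \<Rightarrow> nat) set" where
  "compose_set r S \<kappa> = (\<lambda>\<phi>. restrict (\<phi> \<circ> \<kappa>) (tree_verts r)) ` S"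

definition semi_invariant :: "nat \<Rightarrow> nat list \<Rightarrow> (nat list \<Rightarrow> nat) measure \<Rightarrow> bool" where
  "semi_invariant r x \<mu> \<longleftrightarrow>
     (\<forall>\<kappa> S. parity_aut r x \<kappa> \<longrightarrow> S \<in> sets \<mu> \<longrightarrow> emeasure \<mu> (compose_set r S \<kappa>) = emeasure \<mu> S)"

definition zsum :: "nat \<Rightarrow> (nat \<Rightarrow> nat \<Rightarrow> bool) \<Rightarrow> (int \<Rightarrow> real) \<Rightarrow> int \<Rightarrow> real" where
  "zsum q E w i = (\<Sum>j\<in>{j \<in> double_nodes q. double_adj q E i j}. w j)"

text \<open>Stationary distribution pi_i \<propto> w_i z_i restricted to positive nodes and renormalized.\<close>
definition root_dist :: "nat \<Rightarrow> (nat \<Rightarrow> nat \<Rightarrow> bool) \<Rightarrow> (int \<Rightarrow> real) \<Rightarrow> int \<Rightarrow> real" where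
  "root_dist q E w i =
     (if i \<in> {1..int q} then w i * zsum q E w i / (\<Sum>j\<in>{1..int q}. w j * zsum q E w j) else 0)"

definition brw_prob :: "nat \<Rightarrow> nat \<Rightarrow> (nat \<Rightarrow> nat \<Rightarrow> bool) \<Rightarrow> (int \<Rightarrow> real) \<Rightarrow> nat list \<Rightarrow> nat
     \<Rightarrow> (nat list \<Rightarrow> int) \<Rightarrow> real" where
  "brw_prob r q E w x n \<zeta> =
     root_dist q E w (\<zeta> x) *
     (\<Prod>v\<in>ball r x n - {x}.
        (if double_adj q E (\<zeta> (tparent r x v)) (\<zeta> v)
         then w (\<zeta> v) / zsum q E w (\<zeta> (tparent r x v)) else 0))"

definition is_brw_law :: "nat \<Rightarrow> nat \<Rightarrow> (nat \<Rightarrow> nat \<Rightarrow> bool) \<Rightarrow> (int \<Rightarrow> real) \<Rightarrow> nat list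
     \<Rightarrow> (nat list \<Rightarrow> int) measure \<Rightarrow> bool" where
  "is_brw_law r q E w x \<nu> \<longleftrightarrow>
     prob_space \<nu> \<and> sets \<nu> = sets (cfgM2 r) \<and>
     (\<forall>n \<zeta>. measure \<nu> {\<psi> \<in> space \<nu>. \<forall>v\<in>ball r x n. \<psi> v = \<zeta> v} = brw_prob r q E w x n \<zeta>)"

definition abs_cfg :: "nat \<Rightarrow> (nat list \<Rightarrow> int) \<Rightarrow> (nat list \<Rightarrow> nat)" where
  "abs_cfg r \<psi> = (\<lambda>v\<in>tree_verts r. nat \<bar>\<psi> v\<bar>)"

end

theory Submission
  imports Defs
begin

text \<open>
Semi-invariance and the automorphisms of the tree show that the joint law J i b of the spins at
the ends of an edge (i at the end of even distance from x) is the same for all edges, and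
simplicity makes the measure a tree-indexed Markov chain: a cylinder on a rooted subtree has
probability alpha (spin at x) times the product of J / marginal along its edges. The probability
that a vertex has spin i and all its d neighbours spin b is alpha i (J i b / alpha i)^d by
simplicity and P(all neighbours b) lam i / Z b by the Gibbs property; once connectivity and
non-bipartiteness have made all marginals positive, this gives J i b = f i g b on the edges of H.
For the weights w i = f i, w (-b) = g b on 2H the root marginal is alpha i = w i z i and the
transition probabilities are w (child) / z (parent): signing the spins by the parity of the
distance to x maps the measure to the branching w-random walk, and taking absolute values maps it
back.
\<close>

section \<open>Geometry of the tree\<close>

lemma le_length_lcp_iff:
  "k \<le> length (lcp u v) \<longleftrightarrow> k \<le> length u \<and> k \<le> length v \<and> take k u = take k v"
proof (induction u v arbitrary: k rule: lcp.induct)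
  case (1 a as b bs)
  then show ?case by (cases k) auto
qed (auto simp: le_Suc_eq)

lemma length_lcp_le1: "length (lcp u v) \<le> length u"
  and length_lcp_le2: "length (lcp u v) \<le> length v"
  and take_length_lcp: "take (length (lcp u v)) u = take (length (lcp u v)) v"
  using le_length_lcp_iff[of "length (lcp u v)" u v] by auto

lemma lcp_commute: "lcp u v = lcp v u"
  by (induction u v rule: lcp.induct) auto

lemma lcp_self [simp]: "lcp u u = u"
  by (induction u) auto

lemma length_lcp_min: "min (length (lcp u v)) (length (lcp v w)) \<le> length (lcp u w)"
proof -
  let ?k = "min (length (lcp u v)) (length (lcp v w))"
  have "take ?k u = take ?k v" "take ?k v = take ?k w" "?k \<le> length u" "?k \<le> length w"
    using le_length_lcp_iff[of ?k u v] le_length_lcp_iff[of ?k v w] by auto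
  then show ?thesis using le_length_lcp_iff by auto
qed

lemma tdist_plus_lcp: "tdist u v + 2 * length (lcp u v) = length u + length v"
  unfolding tdist_def using length_lcp_le1[of u v] length_lcp_le2[of u v] by simp

lemma tdist_commute: "tdist u v = tdist v u"
  unfolding tdist_def by (simp add: lcp_commute add.commute)

lemma tdist_self [simp]: "tdist u u = 0"
  unfolding tdist_def by simp

lemma tdist_eq_0_iff [simp]: "tdist u v = 0 \<longleftrightarrow> u = v"
proof
  assume "tdist u v = 0"
  then have "length (lcp u v) = length u" "length (lcp u v) = length v"
    using tdist_plus_lcp[of u v] length_lcp_le1[of u v] length_lcp_le2[of u v] by auto
  then show "u = v" using take_length_lcp[of u v] by simp
qed simp

lemma tdist_triangle: "tdist u w \<le> tdist u v + tdist v w"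
  using length_lcp_min[of u v w] length_lcp_le2[of u v] length_lcp_le1[of v w]
    tdist_plus_lcp[of u w] tdist_plus_lcp[of u v] tdist_plus_lcp[of v w] by linarith

lemma even_tdist_iff: "even (tdist u v) \<longleftrightarrow> even (length u + length v)"
  using tdist_plus_lcp[of u v] by presburger

lemma length_le_tdist: "length v \<le> length u + tdist u v"
  using tdist_plus_lcp[of u v] length_lcp_le1[of u v] by linarith

lemma tdist_snoc: "tdist u (u @ [a]) = 1"
proof -
  have "length (lcp u (u @ [a])) = length u"
    using le_length_lcp_iff[of "length u" u "u @ [a]"] length_lcp_le1[of u "u @ [a]"] by auto
  then show ?thesis using tdist_plus_lcp[of u "u @ [a]"] by simp
qed

lemma tree_adj_commute: "tree_adj r u v \<longleftrightarrow> tree_adj r v u"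
  unfolding tree_adj_def by auto

lemma tree_adj_cases: "tree_adj r u v \<Longrightarrow> (\<exists>a. v = u @ [a]) \<or> (u \<noteq> [] \<and> v = butlast u)"
  unfolding tree_adj_def by (metis append_butlast_last_id)

lemma tree_adjD: "tree_adj r u v \<Longrightarrow> u \<in> tree_verts r \<and> v \<in> tree_verts r"
  unfolding tree_adj_def by auto

lemma tree_adj_tdist: "tree_adj r u v \<Longrightarrow> tdist u v = 1"
  using tree_adj_cases[of r u v] tdist_snoc tdist_commute by (metis append_butlast_last_id)

lemma tree_adj_irrefl: "\<not> tree_adj r u u"
  using tree_adj_tdist by fastforce

lemma tree_adj_odd_length: "tree_adj r u v \<Longrightarrow> odd (length u + length v)"
  using even_tdist_iff[of u v] tree_adj_tdist by fastforce

lemma tree_adj_not_triangle: "tree_adj r u v \<Longrightarrow> tree_adj r u v' \<Longrightarrow> \<not> tree_adj r v v'"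
proof
  assume "tree_adj r u v" "tree_adj r u v'" "tree_adj r v v'"
  then have "odd (length u + length v)" "odd (length u + length v')" "odd (length v + length v')"
    using tree_adj_odd_length by blast+
  then show False by presburger
qed

lemma tree_adj_tdist_cases:
  assumes "tree_adj r u v"
  shows "tdist u w = tdist v w + 1 \<or> tdist v w = tdist u w + 1"
proof -
  have "tdist u v = 1" using tree_adj_tdist[OF assms] .
  moreover have "odd (tdist u w + tdist v w)"
    using tree_adj_odd_length[OF assms] even_tdist_iff[of u w] even_tdist_iff[of v w] by auto
  ultimately show ?thesis
    using tdist_triangle[of u w v] tdist_triangle[of v w u] tdist_commute[of u v] by presburger
qed

lemma take_in_tree_verts: "w \<in> tree_verts r \<Longrightarrow> take k w \<in> tree_verts r"
  unfolding tree_verts_def by (cases k; cases w) (auto dest: in_set_takeD)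

lemma butlast_in_tree_verts: "w \<in> tree_verts r \<Longrightarrow> butlast w \<in> tree_verts r"
  by (metis butlast_conv_take take_in_tree_verts)

lemma Nil_in_tree_verts [simp]: "[] \<in> tree_verts r"
  and zero_in_tree_verts [simp]: "[0] \<in> tree_verts r"
  unfolding tree_verts_def by simp_all

lemma set_tree_vert: "v \<in> tree_verts r \<Longrightarrow> set v \<subseteq> {..r}"
  unfolding tree_verts_def by (cases v) auto

lemma exists_tree_adj_closer:
  assumes u: "u \<in> tree_verts r" and w: "w \<in> tree_verts r" and "u \<noteq> w"
  shows "\<exists>n. tree_adj r u n \<and> tdist n w < tdist u w"
proof (cases "take (length u) w = u")
  case True
  then have lu: "length u < length w"
    using \<open>u \<noteq> w\<close> by (metis linorder_not_le take_all_iff)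
  define n where "n = take (Suc (length u)) w"
  have "n = u @ [w ! length u]" using True lu n_def by (simp add: take_Suc_conv_app_nth)
  then have adj: "tree_adj r u n"
    unfolding tree_adj_def using u take_in_tree_verts[OF w, of "Suc (length u)"] n_def by simp
  have "length (lcp u w) = length u" "length (lcp n w) = length n"
    using le_length_lcp_iff[of "length u" u w] length_lcp_le1[of u w] True lu
      le_length_lcp_iff[of "length n" n w] length_lcp_le1[of n w] n_def by auto
  then have "tdist n w < tdist u w" using tdist_plus_lcp[of n w] tdist_plus_lcp[of u w] lu n_def by simp
  then show ?thesis using adj by blast
next
  case False
  then have "u \<noteq> []" by auto
  define n where "n = butlast u"
  have adj: "tree_adj r u n"
    unfolding tree_adj_def n_def using u butlast_in_tree_verts[OF u] \<open>u \<noteq> []\<close> by auto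
  have "length (lcp u w) < length u"
    using False take_length_lcp[of u w] length_lcp_le1[of u w] le_less by fastforce
  then have "length (lcp u w) \<le> length (lcp n w)"
    using le_length_lcp_iff[of "length (lcp u w)" u w] le_length_lcp_iff[of "length (lcp u w)" n w]
    unfolding n_def by (simp add: take_butlast)
  moreover have "length n + 1 = length u" using \<open>u \<noteq> []\<close> unfolding n_def by simp
  ultimately have "tdist n w < tdist u w"
    using tdist_plus_lcp[of n w] tdist_plus_lcp[of u w] unfolding n_def by linarith
  then show ?thesis using adj by blast
qed

lemma take_Suc_if_snoc_closer:
  assumes "tdist (u @ [a]) w < tdist u w"
  shows "take (Suc (length u)) w = u @ [a]"
proof -
  let ?L = "length (lcp u w)" and ?L' = "length (lcp (u @ [a]) w)"
  have "?L' \<ge> Suc ?L" using assms tdist_plus_lcp[of u w] tdist_plus_lcp[of "u @ [a]" w] by simp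
  moreover have "?L' \<le> length u \<Longrightarrow> ?L' \<le> ?L"
    using take_length_lcp[of "u @ [a]" w] length_lcp_le2[of "u @ [a]" w]
      le_length_lcp_iff[of ?L' u w] by auto
  ultimately have "?L' = Suc (length u)" using length_lcp_le1[of "u @ [a]" w] by fastforce
  then show ?thesis using take_length_lcp[of "u @ [a]" w] by simp
qed

lemma take_length_if_butlast_closer:
  assumes "u \<noteq> []" "tdist (butlast u) w < tdist u w"
  shows "take (length u) w \<noteq> u"
proof
  assume t: "take (length u) w = u"
  then have "length u \<le> length w" by (metis length_take min.bounded_iff order_refl)
  then have "length (lcp u w) = length u"
    using t le_length_lcp_iff[of "length u" u w] length_lcp_le1[of u w] by auto
  then show False
    using assms tdist_plus_lcp[of u w] tdist_plus_lcp[of "butlast u" w]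
      length_lcp_le1[of "butlast u" w] by simp
qed

lemma take_length_if_snoc_closer:
  assumes "tdist (u @ [a]) w < tdist u w"
  shows "take (length u) w = u"
proof -
  have "take (length u) w = take (length u) (take (Suc (length u)) w)" by simp
  then show ?thesis using take_Suc_if_snoc_closer[OF assms] by simp
qed

lemma tree_adj_closer_unique:
  assumes "tree_adj r u n1" "tree_adj r u n2" "tdist n1 w < tdist u w" "tdist n2 w < tdist u w"
  shows "n1 = n2"
proof -
  have closer_snoc: "n = u @ [take (Suc (length u)) w ! length u]"
    if "n = u @ [a]" "tdist n w < tdist u w" for n a
    using take_Suc_if_snoc_closer[of u a w] that by simp
  have closer_butlast: "\<not> (u \<noteq> [] \<and> n' = butlast u)"
    if "n = u @ [a]" "tdist n w < tdist u w" "tdist n' w < tdist u w" for n n' a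
    using take_length_if_snoc_closer[of u a w] take_length_if_butlast_closer[of u w] that by blast
  show ?thesis
    using tree_adj_cases[OF assms(1)] tree_adj_cases[OF assms(2)] assms(3,4)
      closer_snoc closer_butlast by metis
qed

lemma tree_adj_tdist_root_cases:
  "tree_adj r u v \<Longrightarrow> tdist x u + 1 = tdist x v \<or> tdist x v + 1 = tdist x u"
  using tree_adj_tdist_cases[of r u v x] tdist_commute by metis

lemma
  assumes "x \<in> tree_verts r" "v \<in> tree_verts r" "v \<noteq> x"
  shows tree_adj_tparent: "tree_adj r (tparent r x v) v"
    and tdist_tparent: "tdist x (tparent r x v) + 1 = tdist x v"
proof -
  obtain n where n: "tree_adj r v n" "tdist n x < tdist v x"
    using exists_tree_adj_closer[OF assms(2,1,3)] by blast
  have "tparent r x v = n"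
    unfolding tparent_def
  proof (rule the_equality)
    show "tree_adj r n v \<and> tdist x n < tdist x v" using n tree_adj_commute tdist_commute by metis
    show "u = n" if "tree_adj r u v \<and> tdist x u < tdist x v" for u
      using that n tree_adj_closer_unique tree_adj_commute tdist_commute by metis
  qed
  moreover have "tree_adj r n v" using n tree_adj_commute by blast
  ultimately show "tree_adj r (tparent r x v) v" "tdist x (tparent r x v) + 1 = tdist x v"
    using n tree_adj_tdist_root_cases[of r n v x] tdist_commute[of x] by auto
qed

definition tree_nbrs :: "nat \<Rightarrow> nat list \<Rightarrow> nat list set" where
  "tree_nbrs r u = {n. tree_adj r u n}"

lemma tree_nbrs_cases:
  assumes "n \<in> tree_nbrs r u"
  shows "n = butlast u \<or> (\<exists>a\<le>r. n = u @ [a])"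
proof -
  have adj: "tree_adj r u n" using assms unfolding tree_nbrs_def by simp
  show ?thesis
  proof (cases "\<exists>a. n = u @ [a]")
    case True
    then obtain a where "n = u @ [a]" by blast
    moreover have "n \<in> tree_verts r" using tree_adjD[OF adj] by simp
    ultimately show ?thesis unfolding tree_verts_def by (cases u) auto
  qed (use tree_adj_cases[OF adj] in blast)
qed

lemma finite_tree_nbrs: "finite (tree_nbrs r u)"
  by (rule finite_subset[of _ "insert (butlast u) ((\<lambda>a. u @ [a]) ` {..r})"])
    (use tree_nbrs_cases in fastforce)+

lemma tree_nbrs_subset: "tree_nbrs r u \<subseteq> tree_verts r"
  unfolding tree_nbrs_def using tree_adjD by blast

lemma tree_nbrs_nonempty:
  assumes "u \<in> tree_verts r"
  shows "tree_nbrs r u \<noteq> {}"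
proof -
  have "(if u = [] then [0] else butlast u) \<in> tree_nbrs r u"
    using assms butlast_in_tree_verts unfolding tree_nbrs_def tree_adj_def by auto
  then show ?thesis by blast
qed

lemma card_tree_nbrs_ge_1: "u \<in> tree_verts r \<Longrightarrow> card (tree_nbrs r u) \<ge> 1"
  using finite_tree_nbrs tree_nbrs_nonempty by (simp add: Suc_le_eq card_gt_0_iff)

lemma tcomp_tree_adj_closed:
  assumes w: "w \<in> tcomp r u c" and "w \<noteq> c" and wp: "tree_adj r w p" and uc: "tree_adj r u c"
  shows "p \<in> tcomp r u c"
proof (rule ccontr)
  assume "p \<notin> tcomp r u c"
  have in_verts: "p \<in> tree_verts r" "w \<in> tree_verts r" "c \<in> tree_verts r"
    using tree_adjD[OF wp] tree_adjD[OF uc] by auto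
  have "tdist c w < tdist u w" "\<not> tdist c p < tdist u p"
    using w \<open>p \<notin> tcomp r u c\<close> in_verts unfolding tcomp_def by auto
  moreover have "tdist w u = tdist u w" "tdist p u = tdist u p" "tdist w c = tdist c w"
    "tdist p c = tdist c p"
    using tdist_commute by metis+
  ultimately have p_toward_u: "tdist p u < tdist w u" and p_away_from_c: "tdist w c < tdist p c"
    using tree_adj_tdist_cases[OF uc, of w] tree_adj_tdist_cases[OF uc, of p]
      tree_adj_tdist_cases[OF wp, of u] tree_adj_tdist_cases[OF wp, of c] by linarith+
  obtain p' where p': "tree_adj r w p'" "tdist p' c < tdist w c"
    using exists_tree_adj_closer[OF in_verts(2,3) \<open>w \<noteq> c\<close>] by blast
  have "tdist u p' \<le> tdist u c + tdist c p'" by (rule tdist_triangle)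
  moreover have "tdist u c = 1" using tree_adj_tdist[OF uc] .
  moreover have "tdist c p' = tdist p' c" "tdist p' u = tdist u p'" using tdist_commute by metis+
  ultimately have "tdist p' u < tdist w u"
    using p' \<open>tdist w u = tdist u w\<close> \<open>tdist w c = tdist c w\<close> \<open>tdist c w < tdist u w\<close>
      tree_adj_tdist_cases[OF uc, of w] tree_adj_tdist_cases[OF p'(1), of c] by linarith
  then have "p = p'" using tree_adj_closer_unique[OF wp p'(1)] p_toward_u by blast
  then show False using p' p_away_from_c by simp
qed

lemma tcomp_self: "tree_adj r u n \<Longrightarrow> n \<in> tcomp r u n"
  unfolding tcomp_def using tree_adjD tree_adj_tdist by fastforce

lemma exists_tcomp:
  "u \<in> tree_verts r \<Longrightarrow> w \<in> tree_verts r \<Longrightarrow> w \<noteq> u \<Longrightarrow>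
    \<exists>n\<in>tree_nbrs r u. w \<in> tcomp r u n"
  using exists_tree_adj_closer[of u r w] unfolding tcomp_def tree_nbrs_def by auto

lemma tcomp_nbr_unique: "tree_adj r u n \<Longrightarrow> tree_adj r u n' \<Longrightarrow> n' \<in> tcomp r u n \<Longrightarrow> n' = n"
  using tree_adj_tdist unfolding tcomp_def by fastforce

lemma finite_ball: "finite (ball r x n)"
proof (rule finite_subset)
  show "ball r x n \<subseteq> {v. set v \<subseteq> {..r} \<and> length v \<le> length x + n}"
  proof
    fix v assume "v \<in> ball r x n"
    then show "v \<in> {v. set v \<subseteq> {..r} \<and> length v \<le> length x + n}"
      using set_tree_vert[of v r] length_le_tdist[of v x] unfolding ball_def by auto
  qed
  show "finite {v. set v \<subseteq> {..r} \<and> length v \<le> length x + n}"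
    by (rule finite_lists_length_le) simp
qed

lemma ball_subset: "ball r x n \<subseteq> tree_verts r"
  unfolding ball_def by blast

lemma center_in_ball: "x \<in> tree_verts r \<Longrightarrow> x \<in> ball r x n"
  unfolding ball_def by simp

lemma tparent_in_ball:
  "x \<in> tree_verts r \<Longrightarrow> v \<in> ball r x n \<Longrightarrow> v \<noteq> x \<Longrightarrow> tparent r x v \<in> ball r x n"
  unfolding ball_def using tree_adj_tparent tdist_tparent tree_adjD by fastforce

definition rooted_subtree :: "nat \<Rightarrow> nat list \<Rightarrow> nat list set \<Rightarrow> bool" where
  "rooted_subtree r x W \<longleftrightarrow> finite W \<and> x \<in> W \<and> W \<subseteq> tree_verts r \<and>
     (\<forall>v\<in>W. v \<noteq> x \<longrightarrow> tparent r x v \<in> W)"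

lemma rooted_subtree_ball: "x \<in> tree_verts r \<Longrightarrow> rooted_subtree r x (ball r x n)"
  unfolding rooted_subtree_def
  using finite_ball center_in_ball ball_subset tparent_in_ball by blast

text \<open>Removing a vertex of maximal distance from the root leaves a rooted subtree.\<close>

lemma rooted_subtree_remove_leaf:
  assumes W: "rooted_subtree r x W" and "W \<noteq> {x}" and x: "x \<in> tree_verts r"
  obtains c where "c \<in> W" "c \<noteq> x" "rooted_subtree r x (W - {c})"
proof -
  have fin: "finite (W - {x})" and ne: "W - {x} \<noteq> {}"
    using W \<open>W \<noteq> {x}\<close> unfolding rooted_subtree_def by auto
  obtain c where c: "c \<in> W - {x}" and max: "\<And>v. v \<in> W - {x} \<Longrightarrow> tdist x v \<le> tdist x c"
    using Max_in[of "tdist x ` (W - {x})"] Max_ge[of "tdist x ` (W - {x})"] fin ne by fastforce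
  have "tparent r x v \<noteq> c" if "v \<in> W" "v \<noteq> x" for v
    using that max[of v] tdist_tparent[OF x _ \<open>v \<noteq> x\<close>] W unfolding rooted_subtree_def by fastforce
  then have "rooted_subtree r x (W - {c})"
    using W c unfolding rooted_subtree_def by auto
  then show ?thesis using that c by blast
qed

text \<open>Seen from x, the whole component of c lies behind c, so a rooted subtree avoiding c avoids
it entirely.\<close>

lemma rooted_subtree_disjoint_tcomp:
  assumes x: "x \<in> tree_verts r" and W: "rooted_subtree r x W" and "c \<notin> W"
    and uc: "tree_adj r u c" and away: "tdist x c = tdist x u + 1"
  shows "W \<inter> tcomp r u c = {}"
proof -
  have "w \<notin> tcomp r u c" if "w \<in> W" for w
    using that
  proof (induction "tdist x w" arbitrary: w rule: less_induct)
    case less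
    show ?case
    proof
      assume wc: "w \<in> tcomp r u c"
      have "w \<noteq> x"
        using wc away tdist_commute unfolding tcomp_def by (metis add_lessD1 less_irrefl mem_Collect_eq)
      have "w \<noteq> c" using \<open>c \<notin> W\<close> less.prems by auto
      have "w \<in> tree_verts r" using W less.prems unfolding rooted_subtree_def by auto
      note par = tree_adj_tparent[OF x this \<open>w \<noteq> x\<close>] tdist_tparent[OF x this \<open>w \<noteq> x\<close>]
      have "tparent r x w \<in> tcomp r u c"
        using tcomp_tree_adj_closed[OF wc \<open>w \<noteq> c\<close> _ uc] par tree_adj_commute by metis
      moreover have "tparent r x w \<in> W"
        using W less.prems \<open>w \<noteq> x\<close> unfolding rooted_subtree_def by auto
      ultimately show False using less.hyps par by fastforce
    qed
  qed
  then show ?thesis by blast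
qed

section \<open>Automorphisms of the tree\<close>

text \<open>tree_flip is the reflection of the tree in the edge between [] and [0], tree_swap a exchanges
the subtrees of the root at [0] and at [a]; composites of these reach every vertex.\<close>

fun tree_flip :: "nat list \<Rightarrow> nat list" where
  "tree_flip [] = [0]"
| "tree_flip [0] = []"
| "tree_flip (0 # b # rest) = Suc b # rest"
| "tree_flip (Suc a # rest) = 0 # a # rest"

fun tree_swap :: "nat \<Rightarrow> nat list \<Rightarrow> nat list" where
  "tree_swap a [] = []"
| "tree_swap a (h # t) = (if h = 0 then a else if h = a then 0 else h) # t"

definition tree_aut :: "nat \<Rightarrow> (nat list \<Rightarrow> nat list) \<Rightarrow> bool" where
  "tree_aut r \<kappa> \<longleftrightarrow> bij_betw \<kappa> (tree_verts r) (tree_verts r) \<and>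
     (\<forall>u\<in>tree_verts r. \<forall>v\<in>tree_verts r. tree_adj r u v \<longleftrightarrow> tree_adj r (\<kappa> u) (\<kappa> v))"

definition list_adj :: "nat list \<Rightarrow> nat list \<Rightarrow> bool" where
  "list_adj u v \<longleftrightarrow> (v \<noteq> [] \<and> u = butlast v) \<or> (u \<noteq> [] \<and> v = butlast u)"

lemma tree_adj_iff_list_adj: "tree_adj r u v \<longleftrightarrow> u \<in> tree_verts r \<and> v \<in> tree_verts r \<and> list_adj u v"
  unfolding tree_adj_def list_adj_def by auto

lemma list_adj_iff_snoc: "list_adj u v \<longleftrightarrow> (\<exists>a. v = u @ [a]) \<or> (\<exists>a. u = v @ [a])"
  unfolding list_adj_def by (metis append_butlast_last_id butlast_snoc snoc_eq_iff_butlast)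

lemma tree_flip_tree_flip [simp]: "tree_flip (tree_flip v) = v"
  by (induction v rule: tree_flip.induct) auto

lemma tree_swap_tree_swap [simp]: "tree_swap a (tree_swap a v) = v"
  by (cases v) auto

lemma odd_length_tree_flip: "odd (length (tree_flip v) + length v)"
  by (induction v rule: tree_flip.induct) auto

lemma length_tree_swap [simp]: "length (tree_swap a v) = length v"
  by (cases v) auto

lemma list_adj_tree_flip: "list_adj u v \<Longrightarrow> list_adj (tree_flip u) (tree_flip v)"
proof -
  have "list_adj (tree_flip u) (tree_flip (u @ [a]))" for u a
    by (cases u rule: tree_flip.cases; cases a) (auto simp: list_adj_def)
  then show "list_adj u v \<Longrightarrow> list_adj (tree_flip u) (tree_flip v)"
    unfolding list_adj_iff_snoc by (metis list_adj_iff_snoc)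
qed

lemma list_adj_tree_swap: "list_adj u v \<Longrightarrow> list_adj (tree_swap b u) (tree_swap b v)"
proof -
  have "list_adj (tree_swap b u) (tree_swap b (u @ [a]))" for u a
    by (cases u) (auto simp: list_adj_def)
  then show "list_adj u v \<Longrightarrow> list_adj (tree_swap b u) (tree_swap b v)"
    unfolding list_adj_iff_snoc by (metis list_adj_iff_snoc)
qed

lemma tree_flip_in_tree_verts: "v \<in> tree_verts r \<Longrightarrow> tree_flip v \<in> tree_verts r"
  by (induction v rule: tree_flip.induct) (auto simp: tree_verts_def)

lemma tree_swap_in_tree_verts: "b \<le> r \<Longrightarrow> v \<in> tree_verts r \<Longrightarrow> tree_swap b v \<in> tree_verts r"
  by (cases v) (auto simp: tree_verts_def)

lemma tree_aut_involution:
  assumes "\<And>v. \<kappa> (\<kappa> v) = v" "\<And>v. v \<in> tree_verts r \<Longrightarrow> \<kappa> v \<in> tree_verts r"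
    and "\<And>u v. list_adj u v \<Longrightarrow> list_adj (\<kappa> u) (\<kappa> v)"
  shows "tree_aut r \<kappa>"
  unfolding tree_aut_def
proof
  show "bij_betw \<kappa> (tree_verts r) (tree_verts r)"
    by (rule bij_betwI[where g=\<kappa>]) (use assms in auto)
  show "\<forall>u\<in>tree_verts r. \<forall>v\<in>tree_verts r. tree_adj r u v \<longleftrightarrow> tree_adj r (\<kappa> u) (\<kappa> v)"
    unfolding tree_adj_iff_list_adj using assms by metis
qed

lemma tree_aut_tree_flip: "tree_aut r tree_flip"
  by (rule tree_aut_involution) (auto simp: tree_flip_in_tree_verts list_adj_tree_flip)

lemma tree_aut_tree_swap: "b \<le> r \<Longrightarrow> tree_aut r (tree_swap b)"
  by (rule tree_aut_involution) (auto simp: tree_swap_in_tree_verts list_adj_tree_swap)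

lemma tree_aut_id: "tree_aut r id"
  unfolding tree_aut_def by auto

lemma tree_aut_in_verts: "tree_aut r \<kappa> \<Longrightarrow> v \<in> tree_verts r \<Longrightarrow> \<kappa> v \<in> tree_verts r"
  unfolding tree_aut_def using bij_betwE by blast

lemma tree_aut_comp:
  assumes \<kappa>: "tree_aut r \<kappa>" and \<kappa>': "tree_aut r \<kappa>'"
  shows "tree_aut r (\<kappa> \<circ> \<kappa>')"
  unfolding tree_aut_def
proof (intro conjI ballI)
  show "bij_betw (\<kappa> \<circ> \<kappa>') (tree_verts r) (tree_verts r)"
    using assms unfolding tree_aut_def by (blast intro: bij_betw_trans)
  fix u v assume uv: "u \<in> tree_verts r" "v \<in> tree_verts r"
  have "tree_adj r u v \<longleftrightarrow> tree_adj r (\<kappa>' u) (\<kappa>' v)" using \<kappa>' uv unfolding tree_aut_def by blast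
  also have "\<dots> \<longleftrightarrow> tree_adj r (\<kappa> (\<kappa>' u)) (\<kappa> (\<kappa>' v))"
    using \<kappa> tree_aut_in_verts[OF \<kappa>'] uv unfolding tree_aut_def by blast
  finally show "tree_adj r u v \<longleftrightarrow> tree_adj r ((\<kappa> \<circ> \<kappa>') u) ((\<kappa> \<circ> \<kappa>') v)" by simp
qed

lemma tree_aut_nbr_preimage:
  assumes \<kappa>: "tree_aut r \<kappa>" and u: "u \<in> tree_verts r" and adj: "tree_adj r (\<kappa> u) c"
  shows "\<exists>v. tree_adj r u v \<and> \<kappa> v = c"
proof -
  obtain v where "v \<in> tree_verts r" "\<kappa> v = c"
    using \<kappa> tree_adjD[OF adj] unfolding tree_aut_def bij_betw_def by (metis imageE)
  then show ?thesis using \<kappa> u adj unfolding tree_aut_def by blast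
qed

lemma tree_adj_Nil: "tree_adj r [] w \<Longrightarrow> \<exists>c\<le>r. w = [c]"
  using tree_nbrs_cases[of w r "[]"] tree_adj_irrefl unfolding tree_nbrs_def by fastforce

lemma tree_aut_from_Nil:
  assumes "u \<in> tree_verts r"
  shows "\<exists>\<kappa>. tree_aut r \<kappa> \<and> \<kappa> [] = u \<and>
    (\<forall>v. even (length (\<kappa> v) + length v) \<longleftrightarrow> even (length u))"
  using assms
proof (induction u rule: rev_induct)
  case Nil
  show ?case using tree_aut_id by force
next
  case (snoc a v)
  have "v \<in> tree_verts r" using butlast_in_tree_verts[OF snoc.prems] by simp
  then obtain \<kappa> where \<kappa>: "tree_aut r \<kappa>" "\<kappa> [] = v"
    "\<forall>w. even (length (\<kappa> w) + length w) \<longleftrightarrow> even (length v)"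
    using snoc.IH by blast
  have "tree_adj r (\<kappa> []) (v @ [a])"
    unfolding tree_adj_def using \<kappa>(2) \<open>v \<in> tree_verts r\<close> snoc.prems by simp
  then obtain c where "c \<le> r" "\<kappa> [c] = v @ [a]"
    using tree_aut_nbr_preimage[OF \<kappa>(1) Nil_in_tree_verts] tree_adj_Nil by metis
  moreover have "tree_aut r (\<kappa> \<circ> tree_swap c \<circ> tree_flip)"
    using \<kappa>(1) tree_aut_tree_swap[OF \<open>c \<le> r\<close>] tree_aut_tree_flip by (intro tree_aut_comp)
  moreover have "(\<kappa> \<circ> tree_swap c \<circ> tree_flip) [] = v @ [a]" using \<open>\<kappa> [c] = v @ [a]\<close> by simp
  moreover have "even (length ((\<kappa> \<circ> tree_swap c \<circ> tree_flip) w) + length w) \<longleftrightarrow> even (length (v @ [a]))"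
    for w
    using \<kappa>(3)[rule_format, of "tree_swap c (tree_flip w)"] odd_length_tree_flip[of w] by auto
  ultimately show ?case by blast
qed

lemma tree_aut_edge_from_Nil:
  assumes u: "u \<in> tree_verts r" and "even (length u)" and uc: "tree_adj r u c"
  shows "\<exists>\<kappa>. tree_aut r \<kappa> \<and> \<kappa> [] = u \<and> \<kappa> [0] = c \<and>
    (\<forall>v. even (length (\<kappa> v) + length v))"
proof -
  obtain \<kappa> where \<kappa>: "tree_aut r \<kappa>" "\<kappa> [] = u" "\<forall>v. even (length (\<kappa> v) + length v)"
    using tree_aut_from_Nil[OF u] \<open>even (length u)\<close> by blast
  obtain a where "a \<le> r" "\<kappa> [a] = c"
    using tree_aut_nbr_preimage[OF \<kappa>(1) Nil_in_tree_verts] \<kappa>(2) uc tree_adj_Nil by metis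
  moreover have "tree_aut r (\<kappa> \<circ> tree_swap a)"
    using \<kappa>(1) tree_aut_tree_swap[OF \<open>a \<le> r\<close>] by (intro tree_aut_comp)
  moreover have "(\<kappa> \<circ> tree_swap a) [] = u" "(\<kappa> \<circ> tree_swap a) [0] = c"
    using \<kappa>(2) \<open>\<kappa> [a] = c\<close> by simp_all
  moreover have "even (length ((\<kappa> \<circ> tree_swap a) v) + length v)" for v
    using \<kappa>(3)[rule_format, of "tree_swap a v"] by simp
  ultimately show ?thesis by blast
qed

lemma parity_aut_if_tree_aut:
  assumes "tree_aut r \<kappa>" "\<forall>v. even (length (\<kappa> v) + length v)"
  shows "parity_aut r x \<kappa>"
  unfolding parity_aut_def
proof (intro conjI ballI)
  fix v
  have "even (length (\<kappa> v) + length v)" using assms(2) by blast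
  then show "even (tdist x v) \<longleftrightarrow> even (tdist x (\<kappa> v))" unfolding even_tdist_iff by auto
qed (use assms(1) in \<open>auto simp: tree_aut_def\<close>)

lemma sets_PiM_count_space_cylinder:
  assumes "finite S" "S \<subseteq> I"
  shows "{f \<in> space (PiM I (\<lambda>_. count_space (UNIV :: 'b set))). \<forall>w\<in>S. f w = c w}
    \<in> sets (PiM I (\<lambda>_. count_space UNIV))"
proof (intro sets.sets_Collect_finite_All[OF _ assms(1)])
  fix w assume "w \<in> S"
  then have "(\<lambda>f. f w) \<in> measurable (PiM I (\<lambda>_. count_space (UNIV :: 'b set))) (count_space UNIV)"
    using assms(2) by (intro measurable_component_singleton) auto
  from measurable_sets[OF this, of "{c w}"]
  show "{f \<in> space (PiM I (\<lambda>_. count_space (UNIV :: 'b set))). f w = c w}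
      \<in> sets (PiM I (\<lambda>_. count_space UNIV))"
    by (simp add: vimage_def Int_def conj_commute)
qed

lemma measurable_abs_cfg: "abs_cfg r \<in> measurable (cfgM2 r) (cfgM r)"
  unfolding abs_cfg_def cfgM2_def cfgM_def
  by (intro measurable_restrict measurable_compose[OF measurable_component_singleton]) simp_all

locale tree_measure = prob_space \<mu> for \<mu> :: "(nat list \<Rightarrow> nat) measure" +
  fixes r :: nat
  assumes sets_eq: "sets \<mu> = sets (cfgM r)"
begin

lemma space_eq: "space \<mu> = PiE (tree_verts r) (\<lambda>_. UNIV)"
  using sets_eq_imp_space_eq[OF sets_eq] by (simp add: cfgM_def space_PiM)

lemma measurable_eval: "v \<in> tree_verts r \<Longrightarrow> (\<lambda>\<phi>. \<phi> v) \<in> measurable \<mu> (count_space UNIV)"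
  unfolding measurable_cong_sets[OF sets_eq refl] cfgM_def
  by (rule measurable_component_singleton)

lemma sets_Collect_eval2:
  assumes "u \<in> tree_verts r" "v \<in> tree_verts r"
  shows "{\<phi> \<in> space \<mu>. P (\<phi> u) (\<phi> v)} \<in> sets \<mu>"
proof -
  have "(\<lambda>\<phi>. P (\<phi> u) (\<phi> v)) \<in> measurable \<mu> (count_space UNIV)"
    by (rule measurable_compose_countable[where f="\<lambda>a \<phi>. P a (\<phi> v)", OF _ measurable_eval[OF assms(1)]])
      (rule measurable_compose[OF measurable_eval[OF assms(2)]], simp)
  from measurable_sets[OF this, of "{True}"] show ?thesis
    by (simp add: vimage_def Int_def conj_commute)
qed

lemma sets_Collect_eval: "v \<in> tree_verts r \<Longrightarrow> {\<phi> \<in> space \<mu>. P (\<phi> v)} \<in> sets \<mu>"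
  using sets_Collect_eval2[of v v "\<lambda>a _. P a"] by simp

definition cylinder :: "nat list set \<Rightarrow> (nat list \<Rightarrow> nat) \<Rightarrow> (nat list \<Rightarrow> nat) set" where
  "cylinder W \<eta> = {\<phi> \<in> space \<mu>. \<forall>v\<in>W. \<phi> v = \<eta> v}"

lemma sets_cylinder: "finite W \<Longrightarrow> W \<subseteq> tree_verts r \<Longrightarrow> cylinder W \<eta> \<in> sets \<mu>"
  unfolding cylinder_def by (intro sets.sets_Collect_finite_All sets_Collect_eval) auto

lemma cylinder_empty [simp]: "cylinder {} \<eta> = space \<mu>"
  unfolding cylinder_def by auto

lemma cylinder_antimono: "V \<subseteq> W \<Longrightarrow> cylinder W \<eta> \<subseteq> cylinder V \<eta>"
  unfolding cylinder_def by auto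

lemma prob_cylinder_insert_eq_0:
  assumes "finite W" "W \<subseteq> tree_verts r" "u \<in> tree_verts r" "prob (cylinder {u} \<eta>) = 0"
  shows "prob (cylinder (insert u W) \<eta>) = 0"
  using finite_measure_mono[OF cylinder_antimono sets_cylinder, of "{u}" "insert u W" \<eta>] assms
  by (simp add: measure_le_0_iff)

definition pair_event :: "nat list \<Rightarrow> nat list \<Rightarrow> nat \<Rightarrow> nat \<Rightarrow> (nat list \<Rightarrow> nat) set" where
  "pair_event u v i j = {\<phi> \<in> space \<mu>. \<phi> u = i \<and> \<phi> v = j}"

lemma pair_event_commute: "pair_event u v i j = pair_event v u j i"
  unfolding pair_event_def by blast

lemma cylinder_pair: "cylinder {u, v} \<eta> = pair_event u v (\<eta> u) (\<eta> v)"
  unfolding cylinder_def pair_event_def by blast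

lemma cylinder_single: "cylinder {u} \<eta> = {\<phi> \<in> space \<mu>. \<phi> u = \<eta> u}"
  unfolding cylinder_def by blast

lemma sets_pair_event: "u \<in> tree_verts r \<Longrightarrow> v \<in> tree_verts r \<Longrightarrow> pair_event u v i j \<in> sets \<mu>"
  unfolding pair_event_def by (rule sets_Collect_eval2)

lemma compose_set_pair_event:
  assumes \<kappa>: "tree_aut r \<kappa>" and "a \<in> tree_verts r" "b \<in> tree_verts r"
  shows "compose_set r (pair_event (\<kappa> a) (\<kappa> b) i j) \<kappa> = pair_event a b i j"
proof (intro set_eqI iffI)
  fix \<psi> assume "\<psi> \<in> compose_set r (pair_event (\<kappa> a) (\<kappa> b) i j) \<kappa>"
  then show "\<psi> \<in> pair_event a b i j"
    using assms unfolding compose_set_def pair_event_def space_eq by auto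
next
  fix \<psi> assume \<psi>: "\<psi> \<in> pair_event a b i j"
  have inj: "inj_on \<kappa> (tree_verts r)" using \<kappa> unfolding tree_aut_def bij_betw_def by blast
  define \<phi> where "\<phi> = restrict (\<psi> \<circ> inv_into (tree_verts r) \<kappa>) (tree_verts r)"
  have "\<phi> \<in> pair_event (\<kappa> a) (\<kappa> b) i j"
    using \<psi> assms inj tree_aut_in_verts[OF \<kappa>] unfolding \<phi>_def pair_event_def space_eq by auto
  moreover have "restrict (\<phi> \<circ> \<kappa>) (tree_verts r) = \<psi>"
    using \<psi> inj tree_aut_in_verts[OF \<kappa>] unfolding \<phi>_def pair_event_def space_eq
    by (auto simp: PiE_def extensional_def)
  ultimately show "\<psi> \<in> compose_set r (pair_event (\<kappa> a) (\<kappa> b) i j) \<kappa>"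
    unfolding compose_set_def by blast
qed

end

section \<open>Simple measures are tree-indexed Markov chains\<close>

locale simple_tree_measure = tree_measure +
  assumes simple: "simple_gibbs r \<mu>"
begin

lemma cylinder_eq_Inter_tcomp:
  assumes u: "u \<in> tree_verts r" and T: "T \<subseteq> tree_verts r" "u \<notin> T"
  shows "cylinder T \<eta> = (\<Inter>n\<in>tree_nbrs r u. cylinder (T \<inter> tcomp r u n) \<eta>)"
proof
  show "cylinder T \<eta> \<subseteq> (\<Inter>n\<in>tree_nbrs r u. cylinder (T \<inter> tcomp r u n) \<eta>)"
    using cylinder_antimono[of "T \<inter> tcomp r u _" T \<eta>] by blast
  show "(\<Inter>n\<in>tree_nbrs r u. cylinder (T \<inter> tcomp r u n) \<eta>) \<subseteq> cylinder T \<eta>"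
  proof
    fix \<phi> assume \<phi>: "\<phi> \<in> (\<Inter>n\<in>tree_nbrs r u. cylinder (T \<inter> tcomp r u n) \<eta>)"
    then have "\<phi> \<in> space \<mu>"
      using tree_nbrs_nonempty[OF u] unfolding cylinder_def by blast
    moreover have "\<phi> w = \<eta> w" if "w \<in> T" for w
      using exists_tcomp[OF u, of w] that T \<phi> unfolding cylinder_def by blast
    ultimately show "\<phi> \<in> cylinder T \<eta>" unfolding cylinder_def by blast
  qed
qed

text \<open>Conditionally on the spin at u, the restrictions to the components of the tree minus u
are independent, so the probability of a cylinder factors over these components.\<close>

lemma prob_cylinder_factor:
  assumes u: "u \<in> tree_verts r" and T: "finite T" "T \<subseteq> tree_verts r" "u \<notin> T"
    and pos: "prob (cylinder {u} \<eta>) > 0"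
  shows "prob (cylinder (insert u T) \<eta>) = prob (cylinder {u} \<eta>) *
    (\<Prod>n\<in>tree_nbrs r u. prob (cylinder (insert u (T \<inter> tcomp r u n)) \<eta>) / prob (cylinder {u} \<eta>))"
proof -
  define C where "C = cylinder {u} \<eta>"
  have C_pos: "emeasure \<mu> C \<noteq> 0" "emeasure \<mu> C \<noteq> \<infinity>"
    using pos by (auto simp: emeasure_eq_measure C_def)
  let ?\<mu>C = "uniform_measure \<mu> C"
  let ?M = "\<lambda>n. PiM (tcomp r u n) (\<lambda>_. count_space (UNIV :: nat set))"
  let ?X = "\<lambda>n \<phi>. restrict \<phi> (tcomp r u n)"
  define A where "A n = {f \<in> space (?M n). \<forall>w\<in>T \<inter> tcomp r u n. f w = \<eta> w}" for n
  have "prob {\<phi> \<in> space \<mu>. \<phi> u = \<eta> u} > 0" using pos unfolding cylinder_single .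
  then have indep: "prob_space.indep_vars ?\<mu>C ?M ?X (tree_nbrs r u)"
    unfolding C_def cylinder_single tree_nbrs_def
    by (rule bspec[OF simple[unfolded simple_gibbs_def] u, rule_format])
  have A_sets: "A n \<in> sets (?M n)" for n
    unfolding A_def using T by (intro sets_PiM_count_space_cylinder) auto
  have preimage: "?X n -` A n \<inter> space ?\<mu>C = cylinder (T \<inter> tcomp r u n) \<eta>" for n
  proof -
    have "?X n \<phi> \<in> space (?M n)" for \<phi> by (simp add: space_PiM)
    then show ?thesis unfolding A_def cylinder_def by auto
  qed
  have cond: "measure ?\<mu>C (cylinder S \<eta>) = prob (cylinder (insert u S) \<eta>) / prob C"
    if "S \<subseteq> T" for S
  proof -
    have "cylinder S \<eta> \<in> sets \<mu>" using that T finite_subset by (intro sets_cylinder) auto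
    moreover have "C \<inter> cylinder S \<eta> = cylinder (insert u S) \<eta>" unfolding C_def cylinder_def by blast
    ultimately show ?thesis using measure_uniform_measure[OF C_pos] by simp
  qed
  have "prob (cylinder (insert u T) \<eta>) / prob C = measure ?\<mu>C (cylinder T \<eta>)"
    using cond[of T] by simp
  also have "\<dots> = (\<Prod>n\<in>tree_nbrs r u. measure ?\<mu>C (cylinder (T \<inter> tcomp r u n) \<eta>))"
    using prob_space.indep_varsD_finite[OF prob_space_uniform_measure[OF C_pos] indep
        tree_nbrs_nonempty[OF u] finite_tree_nbrs A_sets]
    unfolding preimage cylinder_eq_Inter_tcomp[OF u T(2,3), symmetric] .
  also have "\<dots> = (\<Prod>n\<in>tree_nbrs r u. prob (cylinder (insert u (T \<inter> tcomp r u n)) \<eta>) / prob C)"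
    by (intro prod.cong refl cond) blast
  finally have "prob (cylinder (insert u T) \<eta>) / prob C =
      (\<Prod>n\<in>tree_nbrs r u. prob (cylinder (insert u (T \<inter> tcomp r u n)) \<eta>) / prob C)" .
  then show ?thesis using pos unfolding C_def by (simp add: divide_eq_eq)
qed

text \<open>Both cylinders factor over the components of the tree minus u, and the two factorisations
differ only in the component of c.\<close>

lemma prob_cylinder_insert_leaf:
  assumes u: "u \<in> tree_verts r" and uc: "tree_adj r u c"
    and S: "finite S" "S \<subseteq> tree_verts r" "u \<notin> S" "S \<inter> tcomp r u c = {}"
  shows "prob (cylinder (insert c (insert u S)) \<eta>) =
    prob (cylinder (insert u S) \<eta>) * prob (cylinder {u, c} \<eta>) / prob (cylinder {u} \<eta>)"
proof -
  let ?p = "prob (cylinder {u} \<eta>)"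
  have c: "c \<in> tree_verts r" "c \<noteq> u" "c \<in> tree_nbrs r u" "c \<notin> S"
    using tree_adjD[OF uc] tree_adj_irrefl[of r u] uc S(4) tcomp_self[OF uc]
    unfolding tree_nbrs_def by auto
  have insert_cu: "insert c (insert u S) = insert u (insert c S)" by blast
  show ?thesis
  proof (cases "?p = 0")
    case True
    have "prob (cylinder (insert u (insert c S)) \<eta>) = 0"
      by (rule prob_cylinder_insert_eq_0) (use S c u True in auto)
    then show ?thesis using True insert_cu by simp
  next
    case False
    then have pos: "?p > 0" by (simp add: less_le)
    define F where "F n = prob (cylinder (insert u (S \<inter> tcomp r u n)) \<eta>) / ?p" for n
    have F_c: "F c = 1" using S(4) False unfolding F_def by simp
    have c_comp: "insert c S \<inter> tcomp r u c = {c}" using c S(4) tcomp_self[OF uc] by blast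
    have other_comps: "insert c S \<inter> tcomp r u n = S \<inter> tcomp r u n"
      if "n \<in> tree_nbrs r u - {c}" for n
      using that tcomp_nbr_unique[of r u n c] uc unfolding tree_nbrs_def by blast
    have "prob (cylinder (insert u (insert c S)) \<eta>) =
        ?p * (\<Prod>n\<in>tree_nbrs r u. prob (cylinder (insert u (insert c S \<inter> tcomp r u n)) \<eta>) / ?p)"
      by (rule prob_cylinder_factor[OF u _ _ _ pos]) (use S c in auto)
    also have "\<dots> = ?p * (prob (cylinder {u, c} \<eta>) / ?p *
        (\<Prod>n\<in>tree_nbrs r u - {c}. prob (cylinder (insert u (insert c S \<inter> tcomp r u n)) \<eta>) / ?p))"
      unfolding prod.remove[OF finite_tree_nbrs c(3)] c_comp by simp
    also have "(\<Prod>n\<in>tree_nbrs r u - {c}. prob (cylinder (insert u (insert c S \<inter> tcomp r u n)) \<eta>) / ?p)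
        = (\<Prod>n\<in>tree_nbrs r u - {c}. F n)"
      unfolding F_def by (rule prod.cong[OF refl]) (simp only: other_comps)
    also have "?p * (prob (cylinder {u, c} \<eta>) / ?p * (\<Prod>n\<in>tree_nbrs r u - {c}. F n)) =
        ?p * (\<Prod>n\<in>tree_nbrs r u. F n) * prob (cylinder {u, c} \<eta>) / ?p"
      unfolding prod.remove[OF finite_tree_nbrs c(3)] F_c by simp
    also have "?p * (\<Prod>n\<in>tree_nbrs r u. F n) = prob (cylinder (insert u S) \<eta>)"
      using prob_cylinder_factor[OF u S(1-3) pos] unfolding F_def by simp
    finally show ?thesis using insert_cu by simp
  qed
qed

lemma prob_cylinder_rooted_subtree:
  assumes x: "x \<in> tree_verts r" and "rooted_subtree r x W"
  shows "prob (cylinder W \<eta>) = prob (cylinder {x} \<eta>) *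
    (\<Prod>v\<in>W - {x}. prob (cylinder {tparent r x v, v} \<eta>) / prob (cylinder {tparent r x v} \<eta>))"
  using assms(2)
proof (induction "card W" arbitrary: W rule: less_induct)
  case less
  let ?F = "\<lambda>v. prob (cylinder {tparent r x v, v} \<eta>) / prob (cylinder {tparent r x v} \<eta>)"
  show ?case
  proof (cases "W = {x}")
    case False
    obtain c where c: "c \<in> W" "c \<noteq> x" and W': "rooted_subtree r x (W - {c})"
      using rooted_subtree_remove_leaf[OF less.prems False x] by blast
    define u where "u = tparent r x c"
    have W: "finite W" "W \<subseteq> tree_verts r" using less.prems unfolding rooted_subtree_def by auto
    have uc: "tree_adj r u c" "tdist x c = tdist x u + 1"
      using tree_adj_tparent[OF x _ c(2)] tdist_tparent[OF x _ c(2)] c W unfolding u_def by auto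
    have u: "u \<in> W - {c}" "u \<in> tree_verts r"
      using less.prems c uc(1) tree_adj_irrefl[of r c] tree_adjD[OF uc(1)]
      unfolding rooted_subtree_def u_def by auto
    have disj: "(W - {c} - {u}) \<inter> tcomp r u c = {}"
      using rooted_subtree_disjoint_tcomp[OF x W' _ uc] by blast
    have "W - {c} - {u} \<subseteq> tree_verts r" "finite (W - {c} - {u})" using W by auto
    from prob_cylinder_insert_leaf[OF u(2) uc(1) this(2,1) _ disj]
    have "prob (cylinder (insert c (insert u (W - {c} - {u}))) \<eta>) =
        prob (cylinder (insert u (W - {c} - {u})) \<eta>) * ?F c"
      unfolding u_def by simp
    moreover have "insert c (insert u (W - {c} - {u})) = W" "insert u (W - {c} - {u}) = W - {c}"
      using u c by auto
    ultimately have "prob (cylinder W \<eta>) = prob (cylinder (W - {c}) \<eta>) * ?F c" by simp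
    also have "prob (cylinder (W - {c}) \<eta>) = prob (cylinder {x} \<eta>) * (\<Prod>v\<in>W - {c} - {x}. ?F v)"
      using less.hyps[OF card_Diff1_less[OF W(1) c(1)] W'] .
    also have "prob (cylinder {x} \<eta>) * (\<Prod>v\<in>W - {c} - {x}. ?F v) * ?F c =
        prob (cylinder {x} \<eta>) * (\<Prod>v\<in>W - {x}. ?F v)"
      using prod.remove[of "W - {x}" c ?F] W c by (simp add: Diff_insert2[symmetric] insert_commute)
    finally show ?thesis .
  qed simp
qed

lemma prob_star_cylinder:
  assumes u: "u \<in> tree_verts r"
    and L: "\<And>n. n \<in> tree_nbrs r u \<Longrightarrow> prob (pair_event u n i b) = L"
  defines "p \<equiv> prob {\<phi> \<in> space \<mu>. \<phi> u = i}"
  shows "prob (cylinder (insert u (tree_nbrs r u)) (\<lambda>v. if v = u then i else b)) =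
    p * (L / p) ^ card (tree_nbrs r u)"
proof -
  define \<zeta> where "\<zeta> = (\<lambda>v. if v = u then i else b)"
  have p: "p = prob (cylinder {u} \<zeta>)" unfolding p_def cylinder_single \<zeta>_def by simp
  have "u \<notin> tree_nbrs r u" using tree_adj_irrefl unfolding tree_nbrs_def by blast
  show ?thesis
  proof (cases "p = 0")
    case True
    then show ?thesis
      using prob_cylinder_insert_eq_0[OF finite_tree_nbrs tree_nbrs_subset u] p
      unfolding \<zeta>_def by simp
  next
    case False
    then have pos: "prob (cylinder {u} \<zeta>) > 0" using p by (simp add: less_le)
    have "tree_nbrs r u \<inter> tcomp r u n = {n}" if "n \<in> tree_nbrs r u" for n
      using that tcomp_nbr_unique[of r u n] tcomp_self[of r u n] unfolding tree_nbrs_def by blast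
    then have "prob (cylinder (insert u (tree_nbrs r u \<inter> tcomp r u n)) \<zeta>) = L"
      if "n \<in> tree_nbrs r u" for n
      using that L \<open>u \<notin> tree_nbrs r u\<close> cylinder_pair[of u n \<zeta>] unfolding \<zeta>_def by auto
    then show ?thesis
      using prob_cylinder_factor[OF u finite_tree_nbrs tree_nbrs_subset \<open>u \<notin> tree_nbrs r u\<close> pos] p
      unfolding \<zeta>_def by simp
  qed
qed

end

lemma bij_betw_PiE_singleton: "bij_betw (\<lambda>\<eta>. \<eta> u) (PiE {u} (\<lambda>_. A)) A"
proof (rule bij_betwI[where g="\<lambda>i. restrict (\<lambda>_. i) {u}"])
  show "restrict (\<lambda>_. \<eta> u) {u} = \<eta>" if "\<eta> \<in> PiE {u} (\<lambda>_. A)" for \<eta>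
    using that by (auto simp: PiE_def extensional_def)
qed auto

locale tree_gibbs_measure =
  fixes r q :: nat and E :: "nat \<Rightarrow> nat \<Rightarrow> bool" and lam :: "nat \<Rightarrow> real"
    and \<mu> :: "(nat list \<Rightarrow> nat) measure"
  assumes constraint_graph: "constraint_graph q E"
    and gibbs: "gibbs r q E lam \<mu>"
begin

sublocale tree_measure \<mu> r
  using gibbs unfolding gibbs_def by (blast intro: tree_measure.intro tree_measure_axioms.intro)

lemma edge_sym: "E i j \<Longrightarrow> E j i"
  and edge_nodes: "E i j \<Longrightarrow> i \<in> {1..q} \<and> j \<in> {1..q}"
  using constraint_graph unfolding constraint_graph_def by blast+

lemma AE_hom: "AE \<phi> in \<mu>. is_hom r q E \<phi>"
  using gibbs unfolding gibbs_def by blast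

lemma AE_valid_spin: "v \<in> tree_verts r \<Longrightarrow> AE \<phi> in \<mu>. \<phi> v \<in> {1..q}"
  by (rule eventually_mono[OF AE_hom]) (unfold is_hom_def hom_on_def, blast)

lemma AE_edge: "tree_adj r u v \<Longrightarrow> AE \<phi> in \<mu>. E (\<phi> u) (\<phi> v)"
  by (rule eventually_mono[OF AE_hom]) (unfold is_hom_def hom_on_def, use tree_adjD in blast)

lemma prob_invalid_spin_eq_0:
  assumes "v \<in> tree_verts r"
  shows "prob {\<phi> \<in> space \<mu>. \<phi> v \<notin> {1..q}} = 0"
  using AE_valid_spin[OF assms]
    AE_iff_measurable[OF sets_Collect_eval[OF assms, of "\<lambda>a. a \<notin> {1..q}"], of "\<lambda>\<phi>. \<phi> v \<in> {1..q}"]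
  by (simp add: measure_def)

lemma prob_non_edge_eq_0:
  assumes "tree_adj r u v"
  shows "prob {\<phi> \<in> space \<mu>. \<not> E (\<phi> u) (\<phi> v)} = 0"
  using AE_edge[OF assms] tree_adjD[OF assms]
    AE_iff_measurable[OF sets_Collect_eval2[of u v "\<lambda>a b. \<not> E a b"], of "\<lambda>\<phi>. E (\<phi> u) (\<phi> v)"]
  by (simp add: measure_def)

lemma prob_cylinder_sum_spin:
  assumes W: "finite W" "W \<subseteq> tree_verts r" and v: "v \<in> tree_verts r" "v \<notin> W"
  shows "prob (cylinder W \<eta>) = (\<Sum>j\<in>{1..q}. prob (cylinder (insert v W) (\<eta>(v := j))))"
proof -
  have slice: "cylinder (insert v W) (\<eta>(v := j)) = {\<phi> \<in> cylinder W \<eta>. \<phi> v = j}" for j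
    unfolding cylinder_def using v by auto
  have sets: "cylinder (insert v W) (\<eta>(v := j)) \<in> sets \<mu>" for j
    using W v by (intro sets_cylinder) auto
  have "prob (cylinder W \<eta>) = prob (\<Union>j\<in>{1..q}. cylinder (insert v W) (\<eta>(v := j)))"
  proof (rule measure_eq_AE)
    show "AE \<phi> in \<mu>. \<phi> \<in> cylinder W \<eta> \<longleftrightarrow>
        \<phi> \<in> (\<Union>j\<in>{1..q}. cylinder (insert v W) (\<eta>(v := j)))"
      by (rule eventually_mono[OF AE_valid_spin[OF v(1)]]) (unfold slice, blast)
  qed (use sets sets_cylinder[OF W] in auto)
  also have "\<dots> = (\<Sum>j\<in>{1..q}. prob (cylinder (insert v W) (\<eta>(v := j))))"
    using sets by (intro finite_measure_finite_Union) (auto simp: disjoint_family_on_def slice)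
  finally show ?thesis .
qed

definition site_partition :: "nat \<Rightarrow> real" where
  "site_partition b = (\<Sum>i\<in>{1..q}. if E i b then lam i else 0)"

lemma spec_weight_constant_boundary:
  assumes u: "u \<in> tree_verts r" and b: "b \<in> {1..q}" and \<phi>: "\<forall>n\<in>tree_nbrs r u. \<phi> n = b"
  shows "spec_weight r q E lam {u} \<eta> \<phi> = (if \<eta> u \<in> {1..q} \<and> E (\<eta> u) b then lam (\<eta> u) else 0)"
proof -
  let ?f = "\<lambda>v. if v \<in> {u} then \<eta> v else \<phi> v"
  have star: "{u} \<union> boundary r {u} = insert u (tree_nbrs r u)"
    unfolding boundary_def tree_nbrs_def using tree_adjD tree_adj_irrefl by fastforce
  have f_nbr: "?f n = b" if "n \<in> tree_nbrs r u" for n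
    using that \<phi> tree_adj_irrefl unfolding tree_nbrs_def by auto
  obtain n0 where n0: "n0 \<in> tree_nbrs r u" using tree_nbrs_nonempty[OF u] by blast
  have "hom_on r q E (insert u (tree_nbrs r u)) ?f \<longleftrightarrow> \<eta> u \<in> {1..q} \<and> E (\<eta> u) b"
  proof
    assume "hom_on r q E (insert u (tree_nbrs r u)) ?f"
    then show "\<eta> u \<in> {1..q} \<and> E (\<eta> u) b"
      using n0 f_nbr[OF n0] unfolding hom_on_def tree_nbrs_def by auto
  next
    assume h: "\<eta> u \<in> {1..q} \<and> E (\<eta> u) b"
    have "E (?f v) (?f w)"
      if vw: "v \<in> insert u (tree_nbrs r u)" "w \<in> insert u (tree_nbrs r u)" "tree_adj r v w" for v w
    proof -
      consider "v = u" "w \<in> tree_nbrs r u" | "v \<in> tree_nbrs r u" "w = u"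
        | "v \<in> tree_nbrs r u" "w \<in> tree_nbrs r u"
        using vw tree_adj_irrefl by blast
      then show ?thesis
      proof cases
        case 3
        then show ?thesis using vw(3) tree_adj_not_triangle unfolding tree_nbrs_def by blast
      qed (use f_nbr h edge_sym in auto)
    qed
    then show "hom_on r q E (insert u (tree_nbrs r u)) ?f"
      using h f_nbr b unfolding hom_on_def by auto
  qed
  then show ?thesis unfolding spec_weight_def star by simp
qed

definition site_kernel :: "nat \<Rightarrow> nat \<Rightarrow> real" where
  "site_kernel b i = (if i \<in> {1..q} \<and> E i b then lam i else 0) / site_partition b"

lemma spec_kernel_constant_boundary:
  assumes u: "u \<in> tree_verts r" and b: "b \<in> {1..q}" and \<phi>: "\<forall>n\<in>tree_nbrs r u. \<phi> n = b"
  shows "spec_kernel r q E lam {u} \<eta> \<phi> = site_kernel b (\<eta> u)"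
proof -
  have "(\<Sum>\<eta>\<in>PiE {u} (\<lambda>_. {1..q}). spec_weight r q E lam {u} \<eta> \<phi>)
      = (\<Sum>j\<in>{1..q}. if j \<in> {1..q} \<and> E j b then lam j else 0)"
    unfolding spec_weight_constant_boundary[OF u b \<phi>]
    by (rule sum.reindex_bij_betw[OF bij_betw_PiE_singleton])
  also have "\<dots> = site_partition b" unfolding site_partition_def by (rule sum.cong) auto
  finally show ?thesis
    unfolding spec_kernel_def site_kernel_def spec_weight_constant_boundary[OF u b \<phi>] by (simp only:)
qed

text \<open>The DLR equation for U = {u}, with all neighbours of u carrying the same spin b.\<close>

lemma prob_spin_constant_boundary:
  assumes u: "u \<in> tree_verts r" and b: "b \<in> {1..q}"
  shows "prob (cylinder (insert u (tree_nbrs r u)) (\<lambda>v. if v = u then i else b)) =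
    prob (cylinder (tree_nbrs r u) (\<lambda>_. b)) * site_kernel b i"
proof -
  define \<zeta> where "\<zeta> = (\<lambda>v. if v = u then i else b)"
  define B where "B = cylinder (tree_nbrs r u) (\<lambda>_. b)"
  have u_nbrs: "u \<notin> tree_nbrs r u" using tree_adj_irrefl unfolding tree_nbrs_def by blast
  have B_sets: "B \<in> sets \<mu>" unfolding B_def by (rule sets_cylinder[OF finite_tree_nbrs tree_nbrs_subset])
  have lhs: "{\<phi> \<in> space \<mu>. \<forall>v\<in>{u}. \<phi> v = \<zeta> v} \<inter> B = cylinder (insert u (tree_nbrs r u)) \<zeta>"
    unfolding B_def cylinder_def \<zeta>_def using u_nbrs by auto
  have B_off_u: "\<forall>\<phi>\<in>space \<mu>. \<forall>\<psi>\<in>space \<mu>.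
      (\<forall>v\<in>tree_verts r - {u}. \<phi> v = \<psi> v) \<longrightarrow> (\<phi> \<in> B \<longleftrightarrow> \<psi> \<in> B)"
  proof (intro ballI impI)
    fix \<phi> \<psi> assume "\<phi> \<in> space \<mu>" "\<psi> \<in> space \<mu>" "\<forall>v\<in>tree_verts r - {u}. \<phi> v = \<psi> v"
    moreover have "tree_nbrs r u \<subseteq> tree_verts r - {u}" using tree_nbrs_subset u_nbrs by blast
    ultimately have "\<forall>v\<in>tree_nbrs r u. \<phi> v = \<psi> v" by blast
    with \<open>\<phi> \<in> space \<mu>\<close> \<open>\<psi> \<in> space \<mu>\<close> show "\<phi> \<in> B \<longleftrightarrow> \<psi> \<in> B"
      unfolding B_def cylinder_def by auto
  qed
  have "prob ({\<phi> \<in> space \<mu>. \<forall>v\<in>{u}. \<phi> v = \<zeta> v} \<inter> B) =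
      (\<integral>\<phi>. indicator B \<phi> * spec_kernel r q E lam {u} \<zeta> \<phi> \<partial>\<mu>)"
    using gibbs u B_sets B_off_u unfolding gibbs_def by blast
  then have "prob (cylinder (insert u (tree_nbrs r u)) \<zeta>) =
      (\<integral>\<phi>. indicator B \<phi> * spec_kernel r q E lam {u} \<zeta> \<phi> \<partial>\<mu>)"
    unfolding lhs .
  also have "\<dots> = (\<integral>\<phi>. indicator B \<phi> * site_kernel b i \<partial>\<mu>)"
    using spec_kernel_constant_boundary[OF u b]
    by (intro Bochner_Integration.integral_cong)
      (auto simp: \<zeta>_def B_def cylinder_def split: split_indicator)
  also have "\<dots> = prob B * site_kernel b i" using sets.sets_into_space[OF B_sets] by (simp add: Int_absorb2)
  finally show ?thesis unfolding B_def \<zeta>_def .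
qed

end

section \<open>The edge law of a semi-invariant Gibbs measure\<close>

locale semi_invariant_gibbs = tree_gibbs_measure +
  fixes x :: "nat list"
  assumes x_vert: "x \<in> tree_verts r"
    and semi_inv: "semi_invariant r x \<mu>"
begin

lemma prob_pair_event_eq_root_edge:
  assumes u: "u \<in> tree_verts r" "even (length u)" and uc: "tree_adj r u c"
  shows "prob (pair_event u c i j) = prob (pair_event [] [0] i j)"
proof -
  obtain \<kappa> where \<kappa>: "tree_aut r \<kappa>" "\<kappa> [] = u" "\<kappa> [0] = c" "\<forall>v. even (length (\<kappa> v) + length v)"
    using tree_aut_edge_from_Nil[OF u uc] by blast
  have "emeasure \<mu> (compose_set r (pair_event u c i j) \<kappa>) = emeasure \<mu> (pair_event u c i j)"
    using semi_inv parity_aut_if_tree_aut[OF \<kappa>(1,4)] sets_pair_event[OF u(1)] tree_adjD[OF uc]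
    unfolding semi_invariant_def by blast
  moreover have "compose_set r (pair_event u c i j) \<kappa> = pair_event [] [0] i j"
    using compose_set_pair_event[OF \<kappa>(1), of "[]" "[0]"] \<kappa>(2,3) by simp
  ultimately show ?thesis by (simp add: measure_def)
qed

text \<open>The joint law of the spins at the ends of an edge, the endpoint at even distance from x
listed first; by prob_pair_event_even it is the same for every edge.\<close>

definition edge_law :: "nat \<Rightarrow> nat \<Rightarrow> real" where
  "edge_law i j =
     (if even (length x) then prob (pair_event [] [0] i j) else prob (pair_event [] [0] j i))"

lemma prob_pair_event_even:
  assumes u: "u \<in> tree_verts r" and "even (tdist x u)" and uc: "tree_adj r u c"
  shows "prob (pair_event u c i j) = edge_law i j"
proof (cases "even (length x)")
  case True
  then have "even (length u)" using \<open>even (tdist x u)\<close> even_tdist_iff[of x u] by simp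
  then show ?thesis using prob_pair_event_eq_root_edge[OF u _ uc] True unfolding edge_law_def by simp
next
  case False
  then have "even (length c)"
    using \<open>even (tdist x u)\<close> even_tdist_iff[of x u] tree_adj_odd_length[OF uc] by simp
  then have "prob (pair_event c u j i) = prob (pair_event [] [0] j i)"
    using prob_pair_event_eq_root_edge tree_adjD[OF uc] uc tree_adj_commute by blast
  then show ?thesis using False pair_event_commute[of u c i j] unfolding edge_law_def by simp
qed

lemma prob_pair_event_odd:
  assumes u: "u \<in> tree_verts r" and "odd (tdist x u)" and uc: "tree_adj r u c"
  shows "prob (pair_event u c j i) = edge_law i j"
proof -
  have "even (tdist x c)"
    using \<open>odd (tdist x u)\<close> tree_adj_tdist_root_cases[OF uc, of x] by presburger
  then show ?thesis
    using prob_pair_event_even[of c u i j] tree_adjD[OF uc] uc tree_adj_commute pair_event_commute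
    by metis
qed

lemma edge_law_nonneg: "edge_law i j \<ge> 0"
  unfolding edge_law_def by simp

lemma edge_law_non_edge:
  assumes "\<not> E i j"
  shows "edge_law i j = 0"
proof -
  obtain c where c: "tree_adj r x c" using tree_nbrs_nonempty[OF x_vert] unfolding tree_nbrs_def by blast
  have "edge_law i j = prob (pair_event x c i j)" using prob_pair_event_even[OF x_vert _ c] by simp
  also have "\<dots> \<le> prob {\<phi> \<in> space \<mu>. \<not> E (\<phi> x) (\<phi> c)}"
    using assms tree_adjD[OF c] by (intro finite_measure_mono sets_Collect_eval2) (auto simp: pair_event_def)
  also have "\<dots> = 0" by (rule prob_non_edge_eq_0[OF c])
  finally show ?thesis using edge_law_nonneg[of i j] by simp
qed

lemma prob_spin_eq_sum_pair_event:
  assumes u: "u \<in> tree_verts r" and uc: "tree_adj r u c"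
  shows "prob {\<phi> \<in> space \<mu>. \<phi> u = i} = (\<Sum>j\<in>{1..q}. prob (pair_event u c i j))"
proof -
  have "c \<in> tree_verts r" "c \<noteq> u" using tree_adjD[OF uc] tree_adj_irrefl[of r u] uc by auto
  then have "prob (cylinder {u} (\<lambda>_. i)) = (\<Sum>j\<in>{1..q}. prob (cylinder {c, u} ((\<lambda>_. i)(c := j))))"
    using prob_cylinder_sum_spin[of "{u}" c] u by simp
  moreover have "cylinder {c, u} ((\<lambda>_. i)(c := j)) = pair_event u c i j" for j
    unfolding cylinder_def pair_event_def using \<open>c \<noteq> u\<close> by auto
  ultimately show ?thesis unfolding cylinder_single by simp
qed

definition even_marginal :: "nat \<Rightarrow> real" where
  "even_marginal i = (\<Sum>j\<in>{1..q}. edge_law i j)"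

definition odd_marginal :: "nat \<Rightarrow> real" where
  "odd_marginal j = (\<Sum>i\<in>{1..q}. edge_law i j)"

lemma prob_spin_even:
  assumes u: "u \<in> tree_verts r" and "even (tdist x u)"
  shows "prob {\<phi> \<in> space \<mu>. \<phi> u = i} = even_marginal i"
proof -
  obtain c where c: "tree_adj r u c" using tree_nbrs_nonempty[OF u] unfolding tree_nbrs_def by blast
  then show ?thesis
    using prob_spin_eq_sum_pair_event[OF u c] prob_pair_event_even[OF u \<open>even (tdist x u)\<close> c]
    unfolding even_marginal_def by simp
qed

lemma prob_spin_odd:
  assumes u: "u \<in> tree_verts r" and "odd (tdist x u)"
  shows "prob {\<phi> \<in> space \<mu>. \<phi> u = j} = odd_marginal j"
proof -
  obtain c where c: "tree_adj r u c" using tree_nbrs_nonempty[OF u] unfolding tree_nbrs_def by blast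
  then show ?thesis
    using prob_spin_eq_sum_pair_event[OF u c] prob_pair_event_odd[OF u \<open>odd (tdist x u)\<close> c]
    unfolding odd_marginal_def by simp
qed

lemma sum_even_marginal: "(\<Sum>i\<in>{1..q}. even_marginal i) = 1"
proof -
  have "prob (cylinder {} (\<lambda>_. 0)) = (\<Sum>i\<in>{1..q}. prob (cylinder {x} ((\<lambda>_. 0)(x := i))))"
    using prob_cylinder_sum_spin[of "{}" x] x_vert by simp
  then show ?thesis
    using prob_spin_even[OF x_vert] prob_space unfolding cylinder_single by simp
qed

lemma edge_law_le_even_marginal: "j \<in> {1..q} \<Longrightarrow> edge_law i j \<le> even_marginal i"
  unfolding even_marginal_def by (rule member_le_sum) (auto simp: edge_law_nonneg)

lemma edge_law_le_odd_marginal: "i \<in> {1..q} \<Longrightarrow> edge_law i j \<le> odd_marginal j"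
  unfolding odd_marginal_def by (rule member_le_sum) (auto simp: edge_law_nonneg)

end

section \<open>Spreading positivity\<close>

lemma closed_set_eq_nodes:
  assumes "graph_connected q E" and S: "S \<subseteq> {1..q}" "s \<in> S"
    and closed: "\<And>i j. i \<in> S \<Longrightarrow> E i j \<Longrightarrow> j \<in> S"
  shows "S = {1..q}"
proof -
  have "j \<in> S" if "j \<in> {1..q}" for j
  proof -
    have "E\<^sup>*\<^sup>* s j" using assms that unfolding graph_connected_def by blast
    then show ?thesis by (induction rule: rtranclp_induct) (use S closed in auto)
  qed
  then show ?thesis using S by blast
qed

text \<open>In a connected graph two sets of nodes, each containing the neighbours of the other, either
meet and then both are everything, or they are disjoint and then they 2-colour the graph.\<close>

lemma closed_pair_eq_nodes:
  assumes cg: "constraint_graph q E" and conn: "graph_connected q E" and "\<not> graph_bipartite q E"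
    and AB: "A \<subseteq> {1..q}" "B \<subseteq> {1..q}" "A \<noteq> {}"
    and A_closed: "\<And>i b. i \<in> A \<Longrightarrow> E i b \<Longrightarrow> b \<in> B"
    and B_closed: "\<And>i b. b \<in> B \<Longrightarrow> E i b \<Longrightarrow> i \<in> A"
  shows "A = {1..q}" "B = {1..q}"
proof -
  have sym: "E i j \<Longrightarrow> E j i" for i j using cg unfolding constraint_graph_def by blast
  have "A \<inter> B = {1..q}"
  proof (cases "A \<inter> B = {}")
    case True
    obtain s where "s \<in> A" using AB by blast
    then have "A \<union> B = {1..q}"
      by (intro closed_set_eq_nodes[OF conn]) (use AB A_closed B_closed sym in blast)+
    then have "graph_bipartite q E"
      unfolding graph_bipartite_def using True A_closed B_closed sym
      by (intro exI[of _ "\<lambda>i. i \<in> A"]) blast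
    then show ?thesis using assms by blast
  next
    case False
    then obtain s where "s \<in> A \<inter> B" by blast
    then show ?thesis
      by (intro closed_set_eq_nodes[OF conn]) (use AB A_closed B_closed sym in blast)+
  qed
  then show "A = {1..q}" "B = {1..q}" using AB by blast+
qed

lemma ex_pos_if_sum_pos:
  fixes f :: "'a \<Rightarrow> 'b :: {ordered_comm_monoid_add, linorder}"
  assumes "0 < sum f A"
  obtains k where "k \<in> A" "0 < f k"
  using assms sum_nonpos[of A f] by (meson not_le)

lemma mult_power_divide_pos_transfer:
  fixes P L c :: "'a \<Rightarrow> real" and M :: real
  assumes eq: "\<And>k. P k * (L k / P k) ^ d = M * c k" and "d \<ge> 1"
    and L: "\<And>k. 0 \<le> L k" "\<And>k. L k \<le> P k" and c: "\<And>k. 0 \<le> c k" and "0 \<le> M"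
    and "L k0 > 0" and "c k > 0"
  shows "L k > 0"
proof -
  have "P k0 > 0" using L(2)[of k0] \<open>L k0 > 0\<close> by linarith
  then have "P k0 * (L k0 / P k0) ^ d > 0" using \<open>L k0 > 0\<close> by simp
  then have "M * c k0 > 0" using eq[of k0] by simp
  then have "M > 0" using c[of k0] \<open>0 \<le> M\<close> by (simp add: zero_less_mult_iff)
  then have "P k * (L k / P k) ^ d > 0" using eq[of k] \<open>c k > 0\<close> by simp
  then show ?thesis using L[of k] \<open>d \<ge> 1\<close> by (cases "L k = 0") (simp_all add: power_0_left)
qed

locale simple_semi_invariant_gibbs = semi_invariant_gibbs +
  assumes simple: "simple_gibbs r \<mu>"
    and connected: "graph_connected q E"
    and non_bipartite: "\<not> graph_bipartite q E"
    and lam_pos: "\<forall>i\<in>{1..q}. lam i > 0"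
begin

sublocale simple_tree_measure \<mu> r
  using simple gibbs unfolding gibbs_def
  by (intro simple_tree_measure.intro simple_tree_measure_axioms.intro tree_measure.intro
      tree_measure_axioms.intro) blast+

lemma site_kernel_nonneg: "site_kernel b i \<ge> 0"
  unfolding site_kernel_def site_partition_def using lam_pos
  by (auto intro!: divide_nonneg_nonneg sum_nonneg simp: less_imp_le)

lemma site_partition_pos: "E i b \<Longrightarrow> site_partition b > 0"
  unfolding site_partition_def using lam_pos edge_nodes
  by (intro sum_pos2[of _ i]) (auto simp: less_imp_le)

lemma site_kernel_pos: "E i b \<Longrightarrow> site_kernel b i > 0"
  unfolding site_kernel_def using lam_pos edge_nodes site_partition_pos by auto

text \<open>The probability that u has spin i and all its neighbours spin b, computed once from
simplicity and once from the Gibbs property.\<close>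

lemma star_even:
  assumes u: "u \<in> tree_verts r" "even (tdist x u)" and b: "b \<in> {1..q}"
  shows "even_marginal i * (edge_law i b / even_marginal i) ^ card (tree_nbrs r u) =
    prob (cylinder (tree_nbrs r u) (\<lambda>_. b)) * site_kernel b i"
  using prob_star_cylinder[OF u(1), of i b "edge_law i b"] prob_pair_event_even[OF u]
    prob_spin_even[OF u] prob_spin_constant_boundary[OF u(1) b, of i]
  unfolding tree_nbrs_def by simp

lemma star_odd:
  assumes u: "u \<in> tree_verts r" "odd (tdist x u)" and i: "i \<in> {1..q}"
  shows "odd_marginal b * (edge_law i b / odd_marginal b) ^ card (tree_nbrs r u) =
    prob (cylinder (tree_nbrs r u) (\<lambda>_. i)) * site_kernel i b"
  using prob_star_cylinder[OF u(1), of b i "edge_law i b"] prob_pair_event_odd[OF u]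
    prob_spin_odd[OF u] prob_spin_constant_boundary[OF u(1) i, of b] edge_sym
  unfolding tree_nbrs_def by simp

lemma edge_law_pos_if_odd_marginal_pos:
  assumes b: "b \<in> {1..q}" and "odd_marginal b > 0" and "E i b"
  shows "edge_law i b > 0"
proof -
  obtain i0 where "edge_law i0 b > 0"
    using ex_pos_if_sum_pos assms(2) unfolding odd_marginal_def by blast
  have "even_marginal k * (edge_law k b / even_marginal k) ^ card (tree_nbrs r x) =
      prob (cylinder (tree_nbrs r x) (\<lambda>_. b)) * site_kernel b k" for k
    using star_even[OF x_vert _ b] by simp
  from mult_power_divide_pos_transfer[OF this card_tree_nbrs_ge_1[OF x_vert] edge_law_nonneg
      edge_law_le_even_marginal[OF b] site_kernel_nonneg measure_nonneg \<open>edge_law i0 b > 0\<close>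
      site_kernel_pos[OF \<open>E i b\<close>]]
  show ?thesis .
qed

lemma edge_law_pos_if_even_marginal_pos:
  assumes i: "i \<in> {1..q}" and "even_marginal i > 0" and "E i b"
  shows "edge_law i b > 0"
proof -
  obtain b0 where "edge_law i b0 > 0"
    using ex_pos_if_sum_pos assms(2) unfolding even_marginal_def by blast
  obtain c where c: "tree_adj r x c" using tree_nbrs_nonempty[OF x_vert] unfolding tree_nbrs_def by blast
  then have "c \<in> tree_verts r" "odd (tdist x c)" using tree_adjD tree_adj_tdist by fastforce+
  from mult_power_divide_pos_transfer[OF star_odd[OF this i] card_tree_nbrs_ge_1[OF this(1)]
      edge_law_nonneg edge_law_le_odd_marginal[OF i] site_kernel_nonneg measure_nonneg
      \<open>edge_law i b0 > 0\<close> site_kernel_pos[OF edge_sym[OF \<open>E i b\<close>]]]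
  show ?thesis .
qed

text \<open>Here connectivity and non-bipartiteness enter: positivity of the marginals spreads along
the edges of H.\<close>

lemma marginals_pos:
  shows even_marginal_pos: "i \<in> {1..q} \<Longrightarrow> even_marginal i > 0"
    and odd_marginal_pos: "b \<in> {1..q} \<Longrightarrow> odd_marginal b > 0"
proof -
  define A where "A = {i \<in> {1..q}. even_marginal i > 0}"
  define B where "B = {b \<in> {1..q}. odd_marginal b > 0}"
  have "A \<noteq> {}"
    using sum_even_marginal sum_nonpos[of "{1..q}" even_marginal] unfolding A_def by force
  moreover have "b \<in> B" if "i \<in> A" "E i b" for i b
  proof -
    have "edge_law i b > 0" using that edge_law_pos_if_even_marginal_pos unfolding A_def by blast
    then show ?thesis
      using edge_law_le_odd_marginal[of i b] edge_nodes[OF \<open>E i b\<close>] unfolding B_def by simp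
  qed
  moreover have "i \<in> A" if "b \<in> B" "E i b" for i b
  proof -
    have "edge_law i b > 0" using that edge_law_pos_if_odd_marginal_pos unfolding B_def by blast
    then show ?thesis
      using edge_law_le_even_marginal[of b i] edge_nodes[OF \<open>E i b\<close>] unfolding A_def by simp
  qed
  ultimately have "A = {1..q}" "B = {1..q}"
    using closed_pair_eq_nodes[OF constraint_graph connected non_bipartite, of A B]
    unfolding A_def B_def by blast+
  then show "i \<in> {1..q} \<Longrightarrow> even_marginal i > 0" "b \<in> {1..q} \<Longrightarrow> odd_marginal b > 0"
    unfolding A_def B_def by blast+
qed

lemma edge_law_power:
  assumes "E i b"
  defines "d \<equiv> card (tree_nbrs r x)"
  shows "edge_law i b ^ d =
    prob (cylinder (tree_nbrs r x) (\<lambda>_. b)) / site_partition b * (lam i * even_marginal i ^ (d - 1))"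
proof -
  have i: "i \<in> {1..q}" and b: "b \<in> {1..q}" using edge_nodes[OF assms(1)] by auto
  have pos: "even_marginal i > 0" using even_marginal_pos[OF i] .
  obtain d0 where d0: "d = Suc d0" using card_tree_nbrs_ge_1[OF x_vert] unfolding d_def
    by (cases "card (tree_nbrs r x)") auto
  have "even_marginal i * (edge_law i b / even_marginal i) ^ d = edge_law i b ^ d / even_marginal i ^ d0"
    using pos unfolding d0 by (simp add: power_divide field_simps)
  then show ?thesis
    using star_even[OF x_vert _ b, of i] i assms(1) pos unfolding site_kernel_def d_def[symmetric] d0
    by (simp add: field_simps)
qed

text \<open>The d-th roots of the two factors in edge_law_power.\<close>

definition even_weight :: "nat \<Rightarrow> real" where
  "even_weight i = root (card (tree_nbrs r x)) (lam i * even_marginal i ^ (card (tree_nbrs r x) - 1))"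

definition odd_weight :: "nat \<Rightarrow> real" where
  "odd_weight b = root (card (tree_nbrs r x)) (prob (cylinder (tree_nbrs r x) (\<lambda>_. b)) / site_partition b)"

lemma edge_law_eq:
  assumes "i \<in> {1..q}" "b \<in> {1..q}"
  shows "edge_law i b = (if E i b then even_weight i * odd_weight b else 0)"
proof (cases "E i b")
  case True
  let ?d = "card (tree_nbrs r x)"
  let ?A = "prob (cylinder (tree_nbrs r x) (\<lambda>_. b)) / site_partition b"
    and ?B = "lam i * even_marginal i ^ (?d - 1)"
  have "edge_law i b = root ?d (edge_law i b ^ ?d)"
    using real_root_power_cancel[of ?d "edge_law i b"] card_tree_nbrs_ge_1[OF x_vert] edge_law_nonneg
    by simp
  also have "\<dots> = root ?d ?B * root ?d ?A"
    unfolding edge_law_power[OF True] by (subst mult.commute) (rule real_root_mult)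
  finally show ?thesis using True unfolding even_weight_def odd_weight_def by simp
qed (simp add: edge_law_non_edge)

lemma even_weight_pos: "i \<in> {1..q} \<Longrightarrow> even_weight i > 0"
  unfolding even_weight_def using card_tree_nbrs_ge_1[OF x_vert] even_marginal_pos lam_pos
  by (intro real_root_gt_zero) auto

lemma odd_weight_pos:
  assumes b: "b \<in> {1..q}"
  shows "odd_weight b > 0"
proof -
  obtain i where i: "i \<in> {1..q}" "edge_law i b > 0"
    using ex_pos_if_sum_pos odd_marginal_pos[OF b] unfolding odd_marginal_def by blast
  then have "E i b" using edge_law_non_edge by force
  then have "edge_law i b ^ card (tree_nbrs r x) > 0" using i by simp
  moreover have "lam i * even_marginal i ^ (card (tree_nbrs r x) - 1) > 0"
    using even_marginal_pos[OF i(1)] lam_pos i(1) by simp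
  ultimately have "prob (cylinder (tree_nbrs r x) (\<lambda>_. b)) / site_partition b > 0"
    unfolding edge_law_power[OF \<open>E i b\<close>] by (rule zero_less_mult_pos2)
  then show ?thesis
    unfolding odd_weight_def using card_tree_nbrs_ge_1[OF x_vert] by (intro real_root_gt_zero) auto
qed

definition double_weight :: "int \<Rightarrow> real" where
  "double_weight k = (if k > 0 then even_weight (nat k) else odd_weight (nat (- k)))"

lemma double_weight_pos:
  assumes "k \<in> double_nodes q"
  shows "double_weight k > 0"
proof (cases "k > 0")
  case True
  then have "nat k \<in> {1..q}" using assms unfolding double_nodes_def by auto
  then show ?thesis using True even_weight_pos unfolding double_weight_def by simp
next
  case False
  then have "nat (- k) \<in> {1..q}" using assms unfolding double_nodes_def by auto
  then show ?thesis using False odd_weight_pos unfolding double_weight_def by simp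
qed

lemma double_weight_int [simp]: "i \<ge> 1 \<Longrightarrow> double_weight (int i) = even_weight i"
  and double_weight_uminus_int [simp]: "b \<ge> 1 \<Longrightarrow> double_weight (- int b) = odd_weight b"
  unfolding double_weight_def by simp_all

lemma double_adj_int_uminus_int: "double_adj q E (int i) (- int b) \<longleftrightarrow> i \<in> {1..q} \<and> b \<in> {1..q} \<and> E i b"
  and double_adj_uminus_int_int: "double_adj q E (- int b) (int i) \<longleftrightarrow> i \<in> {1..q} \<and> b \<in> {1..q} \<and> E i b"
  unfolding double_adj_def double_nodes_def using edge_sym by (auto simp: mult_less_0_iff)

lemma zsum_int:
  assumes "i \<in> {1..q}"
  shows "zsum q E double_weight (int i) = (\<Sum>b\<in>{b\<in>{1..q}. E i b}. odd_weight b)"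
proof -
  have "{j \<in> double_nodes q. double_adj q E (int i) j} = (\<lambda>b. - int b) ` {b\<in>{1..q}. E i b}"
  proof (intro set_eqI iffI)
    fix j assume "j \<in> {j \<in> double_nodes q. double_adj q E (int i) j}"
    then have "j = - int (nat (- j))" "double_adj q E (int i) (- int (nat (- j)))"
      using assms unfolding double_adj_def double_nodes_def by (auto simp: mult_less_0_iff)
    then show "j \<in> (\<lambda>b. - int b) ` {b\<in>{1..q}. E i b}"
      unfolding double_adj_int_uminus_int by blast
  next
    fix j assume "j \<in> (\<lambda>b. - int b) ` {b\<in>{1..q}. E i b}"
    then obtain b where "b \<in> {1..q}" "E i b" "j = - int b" by blast
    then show "j \<in> {j \<in> double_nodes q. double_adj q E (int i) j}"
      using double_adj_int_uminus_int[of i b] assms unfolding double_adj_def by auto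
  qed
  then show ?thesis unfolding zsum_def by (simp add: sum.reindex inj_on_def)
qed

lemma zsum_uminus_int:
  assumes "b \<in> {1..q}"
  shows "zsum q E double_weight (- int b) = (\<Sum>i\<in>{i\<in>{1..q}. E i b}. even_weight i)"
proof -
  have "{j \<in> double_nodes q. double_adj q E (- int b) j} = int ` {i\<in>{1..q}. E i b}"
  proof (intro set_eqI iffI)
    fix j assume "j \<in> {j \<in> double_nodes q. double_adj q E (- int b) j}"
    then have "j = int (nat j)" "double_adj q E (- int b) (int (nat j))"
      using assms unfolding double_adj_def double_nodes_def
      by (auto simp: mult_less_0_iff zero_less_mult_iff)
    then show "j \<in> int ` {i\<in>{1..q}. E i b}"
      unfolding double_adj_uminus_int_int by blast
  next
    fix j assume "j \<in> int ` {i\<in>{1..q}. E i b}"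
    then obtain i where "i \<in> {1..q}" "E i b" "j = int i" by blast
    then show "j \<in> {j \<in> double_nodes q. double_adj q E (- int b) j}"
      using double_adj_uminus_int_int[of b i] assms unfolding double_adj_def by auto
  qed
  then show ?thesis unfolding zsum_def by (simp add: sum.reindex)
qed

lemma even_marginal_eq:
  assumes "i \<in> {1..q}"
  shows "even_marginal i = double_weight (int i) * zsum q E double_weight (int i)"
proof -
  have "even_marginal i = (\<Sum>b\<in>{1..q}. if E i b then even_weight i * odd_weight b else 0)"
    unfolding even_marginal_def using edge_law_eq[OF assms] by simp
  also have "\<dots> = even_weight i * (\<Sum>b\<in>{b\<in>{1..q}. E i b}. odd_weight b)"
    by (simp add: sum.inter_filter[symmetric] sum_distrib_left)
  finally show ?thesis using assms by (simp add: zsum_int)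
qed

lemma odd_marginal_eq:
  assumes "b \<in> {1..q}"
  shows "odd_marginal b = double_weight (- int b) * zsum q E double_weight (- int b)"
proof -
  have "odd_marginal b = (\<Sum>i\<in>{1..q}. if E i b then even_weight i * odd_weight b else 0)"
    unfolding odd_marginal_def using edge_law_eq[OF _ assms] by simp
  also have "\<dots> = (\<Sum>i\<in>{i\<in>{1..q}. E i b}. even_weight i) * odd_weight b"
    by (simp add: sum.inter_filter[symmetric] sum_distrib_right)
  finally show ?thesis using assms by (simp add: zsum_uminus_int mult.commute)
qed

lemma root_dist_eq:
  assumes "i \<in> {1..q}"
  shows "root_dist q E double_weight (int i) = even_marginal i"
proof -
  have "(\<Sum>j\<in>{1..int q}. double_weight j * zsum q E double_weight j) =
      (\<Sum>i\<in>{1..q}. double_weight (int i) * zsum q E double_weight (int i))"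
  proof -
    have "{1..int q} = int ` {1..q}" by (simp add: image_int_atLeastAtMost)
    then show ?thesis by (simp add: sum.reindex del: double_weight_int)
  qed
  also have "\<dots> = (\<Sum>i\<in>{1..q}. even_marginal i)"
    by (rule sum.cong) (simp_all add: even_marginal_eq del: double_weight_int)
  also have "\<dots> = 1" by (rule sum_even_marginal)
  finally show ?thesis using assms unfolding root_dist_def by (simp add: even_marginal_eq)
qed

text \<open>A signed spin s is admissible at v if its sign records the parity of the distance from x
to v; these are the values the walk on the double can take at v.\<close>

definition admissible :: "nat list \<Rightarrow> int \<Rightarrow> bool" where
  "admissible v s \<longleftrightarrow> s \<in> double_nodes q \<and> (0 < s \<longleftrightarrow> even (tdist x v))"

lemma admissibleE:
  assumes "admissible v s"
  obtains i where "even (tdist x v)" "s = int i" "i \<in> {1..q}"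
    | b where "odd (tdist x v)" "s = - int b" "b \<in> {1..q}"
proof (cases "s > 0")
  case True
  moreover have "nat s \<in> {1..q}" using assms True unfolding admissible_def double_nodes_def by auto
  ultimately show ?thesis using assms that(1)[of "nat s"] unfolding admissible_def by auto
next
  case False
  moreover have "nat (- s) \<in> {1..q}" using assms False unfolding admissible_def double_nodes_def by auto
  ultimately show ?thesis using assms that(2)[of "nat (- s)"] unfolding admissible_def by auto
qed

lemma prob_spin_admissible:
  assumes "u \<in> tree_verts r" "admissible u s"
  shows "prob {\<phi> \<in> space \<mu>. \<phi> u = nat \<bar>s\<bar>} = double_weight s * zsum q E double_weight s"
  using assms(2)
proof (cases rule: admissibleE)
  case (1 i) then show ?thesis using prob_spin_even[OF assms(1)] even_marginal_eq by simp
next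
  case (2 b) then show ?thesis using prob_spin_odd[OF assms(1)] odd_marginal_eq by simp
qed

lemma prob_pair_event_admissible:
  assumes uv: "tree_adj r u v" and s: "admissible u s" and t: "admissible v t"
  shows "prob (pair_event u v (nat \<bar>s\<bar>) (nat \<bar>t\<bar>)) =
    (if double_adj q E s t then double_weight s * double_weight t else 0)"
proof -
  have u: "u \<in> tree_verts r" using tree_adjD[OF uv] by simp
  have parity: "even (tdist x u) \<longleftrightarrow> odd (tdist x v)"
    using tree_adj_tdist_root_cases[OF uv, of x] by presburger
  from s show ?thesis
  proof (cases rule: admissibleE)
    case (1 i)
    with t parity obtain b where "t = - int b" "b \<in> {1..q}" by (auto elim: admissibleE)
    then show ?thesis
      using 1 prob_pair_event_even[OF u _ uv] edge_law_eq double_adj_int_uminus_int by simp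
  next
    case (2 b)
    with t parity obtain i where "t = int i" "i \<in> {1..q}" by (auto elim: admissibleE)
    then show ?thesis
      using 2 prob_pair_event_odd[OF u _ uv] edge_law_eq double_adj_uminus_int_int by simp
  qed
qed

lemma transition_prob_admissible:
  assumes uv: "tree_adj r u v" and "admissible u (\<zeta> u)" "admissible v (\<zeta> v)"
  defines "\<eta> \<equiv> \<lambda>v. nat \<bar>\<zeta> v\<bar>"
  shows "prob (cylinder {u, v} \<eta>) / prob (cylinder {u} \<eta>) =
    (if double_adj q E (\<zeta> u) (\<zeta> v) then double_weight (\<zeta> v) / zsum q E double_weight (\<zeta> u) else 0)"
proof -
  have "double_weight (\<zeta> u) > 0" using assms(2) double_weight_pos unfolding admissible_def by blast
  then show ?thesis
    unfolding cylinder_pair cylinder_single \<eta>_def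
    using prob_pair_event_admissible[OF assms(1-3)] prob_spin_admissible[OF _ assms(2)] tree_adjD[OF uv]
    by simp
qed

section \<open>The signed configuration is the branching random walk\<close>

definition signed_cfg :: "(nat list \<Rightarrow> nat) \<Rightarrow> (nat list \<Rightarrow> int)" where
  "signed_cfg \<phi> = (\<lambda>v\<in>tree_verts r. if even (tdist x v) then int (\<phi> v) else - int (\<phi> v))"

definition signed_law :: "(nat list \<Rightarrow> int) measure" where
  "signed_law = distr \<mu> (cfgM2 r) signed_cfg"

lemma measurable_signed_cfg: "signed_cfg \<in> measurable \<mu> (cfgM2 r)"
  unfolding signed_cfg_def cfgM2_def
  by (intro measurable_restrict measurable_compose[OF measurable_eval]) simp_all

lemma distr_signed_law_abs_cfg: "distr signed_law (cfgM r) (abs_cfg r) = \<mu>"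
proof -
  have "distr signed_law (cfgM r) (abs_cfg r) = distr \<mu> (cfgM r) (abs_cfg r \<circ> signed_cfg)"
    unfolding signed_law_def by (rule distr_distr[OF measurable_abs_cfg measurable_signed_cfg])
  also have "\<dots> = distr \<mu> (cfgM r) (\<lambda>\<phi>. \<phi>)"
  proof (rule distr_cong[OF refl refl])
    fix \<phi> assume "\<phi> \<in> space \<mu>"
    then have "\<phi> v = undefined" if "v \<notin> tree_verts r" for v
      using that unfolding space_eq by (simp add: PiE_def extensional_def)
    then show "(abs_cfg r \<circ> signed_cfg) \<phi> = \<phi>"
      unfolding abs_cfg_def signed_cfg_def by (auto simp: fun_eq_iff)
  qed
  also have "\<dots> = \<mu>" by (rule distr_id2) (simp add: sets_eq)
  finally show ?thesis .
qed

lemma measure_signed_law_ball: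
  "measure signed_law {\<psi> \<in> space signed_law. \<forall>v\<in>ball r x n. \<psi> v = \<zeta> v} =
   prob {\<phi> \<in> space \<mu>. \<forall>v\<in>ball r x n. signed_cfg \<phi> v = \<zeta> v}"
proof -
  have "{\<psi> \<in> space (cfgM2 r). \<forall>v\<in>ball r x n. \<psi> v = \<zeta> v} \<in> sets (cfgM2 r)"
    unfolding cfgM2_def by (rule sets_PiM_count_space_cylinder[OF finite_ball ball_subset])
  moreover have "signed_cfg \<phi> \<in> space (cfgM2 r)" for \<phi>
    unfolding signed_cfg_def cfgM2_def by (simp add: space_PiM)
  ultimately show ?thesis
    unfolding signed_law_def using measure_distr[OF measurable_signed_cfg] by (simp add: vimage_def Int_def conj_commute)
qed

lemma signed_cfg_eq_iff:
  assumes "v \<in> tree_verts r" "admissible v s"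
  shows "signed_cfg \<phi> v = s \<longleftrightarrow> \<phi> v = nat \<bar>s\<bar>"
  using assms(2) by (cases rule: admissibleE) (use assms(1) in \<open>auto simp: signed_cfg_def\<close>)

lemma signed_cfg_neq:
  assumes "v \<in> tree_verts r" "\<not> admissible v s" "\<phi> v \<in> {1..q}"
  shows "signed_cfg \<phi> v \<noteq> s"
  using assms unfolding signed_cfg_def admissible_def double_nodes_def by auto

lemma measure_signed_law_ball_admissible:
  assumes adm: "\<forall>v\<in>ball r x n. admissible v (\<zeta> v)"
  shows "measure signed_law {\<psi> \<in> space signed_law. \<forall>v\<in>ball r x n. \<psi> v = \<zeta> v} =
    brw_prob r q E double_weight x n \<zeta>"
proof -
  define \<eta> where "\<eta> = (\<lambda>v. nat \<bar>\<zeta> v\<bar>)"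
  have "signed_cfg \<phi> v = \<zeta> v \<longleftrightarrow> \<phi> v = \<eta> v" if "v \<in> ball r x n" for \<phi> v
    using signed_cfg_eq_iff[of v "\<zeta> v" \<phi>] that adm ball_subset unfolding \<eta>_def by blast
  then have ball_eq: "{\<phi> \<in> space \<mu>. \<forall>v\<in>ball r x n. signed_cfg \<phi> v = \<zeta> v} = cylinder (ball r x n) \<eta>"
    unfolding cylinder_def by auto
  have root_eq: "prob (cylinder {x} \<eta>) = root_dist q E double_weight (\<zeta> x)"
    using adm[rule_format, OF center_in_ball[OF x_vert]]
    by (cases rule: admissibleE) (simp_all add: cylinder_single \<eta>_def root_dist_eq prob_spin_even[OF x_vert])
  have step_eq: "prob (cylinder {tparent r x v, v} \<eta>) / prob (cylinder {tparent r x v} \<eta>) =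
      (if double_adj q E (\<zeta> (tparent r x v)) (\<zeta> v)
       then double_weight (\<zeta> v) / zsum q E double_weight (\<zeta> (tparent r x v)) else 0)"
    if "v \<in> ball r x n - {x}" for v
  proof -
    have "v \<in> tree_verts r" "v \<noteq> x" using that ball_subset by auto
    then show ?thesis
      using that adm tparent_in_ball[OF x_vert] tree_adj_tparent[OF x_vert]
      unfolding \<eta>_def by (intro transition_prob_admissible) auto
  qed
  have "measure signed_law {\<psi> \<in> space signed_law. \<forall>v\<in>ball r x n. \<psi> v = \<zeta> v} =
      prob (cylinder (ball r x n) \<eta>)"
    unfolding measure_signed_law_ball ball_eq ..
  also have "\<dots> = prob (cylinder {x} \<eta>) *
      (\<Prod>v\<in>ball r x n - {x}. prob (cylinder {tparent r x v, v} \<eta>) / prob (cylinder {tparent r x v} \<eta>))"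
    by (rule prob_cylinder_rooted_subtree[OF x_vert rooted_subtree_ball[OF x_vert]])
  also have "\<dots> = brw_prob r q E double_weight x n \<zeta>"
    unfolding brw_prob_def root_eq by (rule arg_cong[OF prod.cong[OF refl step_eq]])
  finally show ?thesis .
qed

lemma measure_signed_law_ball_not_admissible:
  assumes "v0 \<in> ball r x n" "\<not> admissible v0 (\<zeta> v0)"
  shows "measure signed_law {\<psi> \<in> space signed_law. \<forall>v\<in>ball r x n. \<psi> v = \<zeta> v} = 0"
proof -
  have v0: "v0 \<in> tree_verts r" using assms(1) ball_subset by blast
  have "prob {\<phi> \<in> space \<mu>. \<forall>v\<in>ball r x n. signed_cfg \<phi> v = \<zeta> v} \<le>
      prob {\<phi> \<in> space \<mu>. \<phi> v0 \<notin> {1..q}}"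
    using signed_cfg_neq[OF v0 assms(2)] assms(1) by (intro finite_measure_mono sets_Collect_eval[OF v0]) blast
  then show ?thesis
    unfolding measure_signed_law_ball prob_invalid_spin_eq_0[OF v0] by (simp add: measure_le_0_iff)
qed

text \<open>A vertex of the ball closest to x with an inadmissible value either is x, where the root
distribution vanishes, or has an admissible parent, whose value it cannot follow.\<close>

lemma brw_prob_not_admissible:
  assumes "v0 \<in> ball r x n" "\<not> admissible v0 (\<zeta> v0)"
  shows "brw_prob r q E double_weight x n \<zeta> = 0"
proof -
  obtain v where v: "v \<in> ball r x n" "\<not> admissible v (\<zeta> v)"
    and closest: "\<And>u. u \<in> ball r x n \<Longrightarrow> \<not> admissible u (\<zeta> u) \<Longrightarrow> tdist x v \<le> tdist x u"
    using ex_has_least_nat[of "\<lambda>u. u \<in> ball r x n \<and> \<not> admissible u (\<zeta> u)" v0 "tdist x"] assms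
    by blast
  show ?thesis
  proof (cases "v = x")
    case True
    then have "root_dist q E double_weight (\<zeta> x) = 0"
      using v unfolding root_dist_def admissible_def double_nodes_def by auto
    then show ?thesis unfolding brw_prob_def by simp
  next
    case False
    let ?p = "tparent r x v"
    have vv: "v \<in> tree_verts r" using v ball_subset by blast
    have p: "?p \<in> ball r x n" "tdist x ?p + 1 = tdist x v"
      using tparent_in_ball[OF x_vert v(1) False] tdist_tparent[OF x_vert vv False] by auto
    then have "admissible ?p (\<zeta> ?p)" using closest by fastforce
    have "\<not> double_adj q E (\<zeta> ?p) (\<zeta> v)"
    proof
      assume "double_adj q E (\<zeta> ?p) (\<zeta> v)"
      then have "\<zeta> v \<in> double_nodes q" "0 < \<zeta> v \<longleftrightarrow> \<not> 0 < \<zeta> ?p"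
        unfolding double_adj_def by (auto simp: mult_less_0_iff)
      moreover have "even (tdist x ?p) \<longleftrightarrow> odd (tdist x v)" using p(2) by presburger
      ultimately have "admissible v (\<zeta> v)"
        using \<open>admissible ?p (\<zeta> ?p)\<close> unfolding admissible_def by blast
      then show False using v(2) by blast
    qed
    then have "(\<Prod>u\<in>ball r x n - {x}. if double_adj q E (\<zeta> (tparent r x u)) (\<zeta> u)
        then double_weight (\<zeta> u) / zsum q E double_weight (\<zeta> (tparent r x u)) else 0) = 0"
      using v(1) False by (intro prod_zero) (auto simp: finite_ball)
    then show ?thesis unfolding brw_prob_def by simp
  qed
qed

lemma is_brw_law_signed_law: "is_brw_law r q E double_weight x signed_law"
  unfolding is_brw_law_def
proof (intro conjI allI)
  show "prob_space signed_law" unfolding signed_law_def by (rule prob_space_distr[OF measurable_signed_cfg])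
  show "sets signed_law = sets (cfgM2 r)" unfolding signed_law_def by simp
  show "measure signed_law {\<psi> \<in> space signed_law. \<forall>v\<in>ball r x n. \<psi> v = \<zeta> v} =
      brw_prob r q E double_weight x n \<zeta>" for n \<zeta>
  proof (cases "\<forall>v\<in>ball r x n. admissible v (\<zeta> v)")
    case True
    then show ?thesis by (rule measure_signed_law_ball_admissible)
  next
    case False
    then obtain v0 where "v0 \<in> ball r x n" "\<not> admissible v0 (\<zeta> v0)" by blast
    then show ?thesis
      using measure_signed_law_ball_not_admissible brw_prob_not_admissible by simp
  qed
qed

end

theorem theorem9p1:
  fixes q r :: nat and E :: "nat \<Rightarrow> nat \<Rightarrow> bool" and x :: "nat list"
    and lam :: "nat \<Rightarrow> real" and \<mu> :: "(nat list \<Rightarrow> nat) measure"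
  assumes "constraint_graph q E"
    and "graph_connected q E"
    and "\<not> graph_bipartite q E"
    and "r \<ge> 1"
    and "x \<in> tree_verts r"
    and "\<forall>i\<in>{1..q}. lam i > 0"
    and "gibbs r q E lam \<mu>"
    and "simple_gibbs r \<mu>"
    and "semi_invariant r x \<mu>"
  shows "\<exists>w \<nu>. (\<forall>i\<in>double_nodes q. w i > 0) \<and> is_brw_law r q E w x \<nu> \<and>
           \<mu> = distr \<nu> (cfgM r) (abs_cfg r)"
proof -
  \<comment> \<open>The argument works for every r.\<close>
  interpret simple_semi_invariant_gibbs r q E lam \<mu> x
    by unfold_locales (fact assms)+
  show ?thesis
    using double_weight_pos is_brw_law_signed_law distr_signed_law_abs_cfg[symmetric] by blast
qed

end
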